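(* Let $U$ be a finite group, $A$ an abelian normal subgroup of $U$ containing $U'$, $G=U/A$, and let $B=A\oplus I_G$ be the $\mathbb Z[G]$-module defined as follows: choose representatives $u_\sigma$ ($\sigma\in G$, $u_1=1$), put $a^\sigma=u_\sigma a u_\sigma^{-1}$, $a_{\sigma,\tau}=u_\sigma u_\tau u_{\sigma\tau}^{-1}$, write $A$ additively, and let $G$ act by $\sigma*a=a^\sigma$, $\sigma*(\tau-1)=a_{\sigma,\tau}+(\sigma\tau-\sigma)$. Let $\mathrm{Tr}_{B/A}=\sum_{\sigma\in G}\sigma$ acting on $B$. Then $$(A:U')\cdot \mathrm{Tr}_{B/A}(b)=0\quad\text{for all } b\in B.$$ In particular, if $A=U'$, the transfer $\mathrm{Ver}_{U/A}:U/U'\to A$ is trivial.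
   Context: $I_G$ is the augmentation ideal of $\mathbb Z[G]$; $\mathrm{Ver}_{U/A}$ is the group-theoretic transfer from $U$ to $A$. *)

theory Defs
  imports "HOL-Algebra.Algebra"
begin

text \<open>Setting: U a group, A an abelian normal subgroup, G = U Mod A (elements are
 cosets of A), r a choice of representatives r sigma in sigma with r A = 1.
 Elements of Z[G] are integer-valued functions on cosets supported on G.\<close>

definition augmentation_ideal :: "'a monoid \<Rightarrow> 'a set \<Rightarrow> ('a set \<Rightarrow> int) set" where
  "augmentation_ideal U A =
     {x. (\<forall>\<sigma>. \<sigma> \<notin> carrier (U Mod A) \<longrightarrow> x \<sigma> = 0) \<and> (\<Sum>\<sigma>\<in>carrier (U Mod A). x \<sigma>) = 0}"

definition modB :: "'a monoid \<Rightarrow> 'a set \<Rightarrow> ('a \<times> ('a set \<Rightarrow> int)) set" where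
  "modB U A = A \<times> augmentation_ideal U A"

abbreviation subA :: "'a monoid \<Rightarrow> 'a set \<Rightarrow> 'a monoid" where
  "subA U A \<equiv> U\<lparr>carrier := A\<rparr>"

definition cocycle :: "'a monoid \<Rightarrow> 'a set \<Rightarrow> ('a set \<Rightarrow> 'a) \<Rightarrow> 'a set \<Rightarrow> 'a set \<Rightarrow> 'a" where
  "cocycle U A r \<sigma> \<tau> = r \<sigma> \<otimes>\<^bsub>U\<^esub> r \<tau> \<otimes>\<^bsub>U\<^esub> inv\<^bsub>U\<^esub> (r (\<sigma> <#>\<^bsub>U\<^esub> \<tau>))"

text \<open>The action of sigma on B: sigma * (a + x) with x = sum_tau x(tau) (tau - 1) in I_G, i.e.
  sigma * a = a^sigma, sigma * (tau - 1) = a_{sigma,tau} + (sigma tau - sigma).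
  (The Z[G]-part is left multiplication by sigma; the A-part is written multiplicatively.)\<close>
definition actB :: "'a monoid \<Rightarrow> 'a set \<Rightarrow> ('a set \<Rightarrow> 'a) \<Rightarrow> 'a set
                   \<Rightarrow> 'a \<times> ('a set \<Rightarrow> int) \<Rightarrow> 'a \<times> ('a set \<Rightarrow> int)" where
  "actB U A r \<sigma> b =
     (r \<sigma> \<otimes>\<^bsub>U\<^esub> fst b \<otimes>\<^bsub>U\<^esub> inv\<^bsub>U\<^esub> (r \<sigma>) \<otimes>\<^bsub>U\<^esub>
        finprod (subA U A) (\<lambda>\<tau>. cocycle U A r \<sigma> \<tau> [^]\<^bsub>U\<^esub> snd b \<tau>) (carrier (U Mod A)),
      \<lambda>\<rho>. if \<rho> \<in> carrier (U Mod A) then snd b (inv\<^bsub>U Mod A\<^esub> \<sigma> \<otimes>\<^bsub>U Mod A\<^esub> \<rho>) else 0)"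

definition traceB :: "'a monoid \<Rightarrow> 'a set \<Rightarrow> ('a set \<Rightarrow> 'a)
                     \<Rightarrow> 'a \<times> ('a set \<Rightarrow> int) \<Rightarrow> 'a \<times> ('a set \<Rightarrow> int)" where
  "traceB U A r b =
     (finprod (subA U A) (\<lambda>\<sigma>. fst (actB U A r \<sigma> b)) (carrier (U Mod A)),
      \<lambda>\<rho>. \<Sum>\<sigma>\<in>carrier (U Mod A). snd (actB U A r \<sigma> b) \<rho>)"

definition smulB :: "'a monoid \<Rightarrow> int \<Rightarrow> 'a \<times> ('a set \<Rightarrow> int) \<Rightarrow> 'a \<times> ('a set \<Rightarrow> int)" where
  "smulB U n b = (fst b [^]\<^bsub>U\<^esub> n, \<lambda>\<rho>. n * snd b \<rho>)"

definition zeroB :: "'a monoid \<Rightarrow> 'a \<times> ('a set \<Rightarrow> int)" where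
  "zeroB U = (\<one>\<^bsub>U\<^esub>, \<lambda>_. 0)"

definition transfer :: "'a monoid \<Rightarrow> 'a set \<Rightarrow> ('a set \<Rightarrow> 'a) \<Rightarrow> 'a \<Rightarrow> 'a" where
  "transfer U A r u =
     finprod (subA U A)
       (\<lambda>\<sigma>. r \<sigma> \<otimes>\<^bsub>U\<^esub> u \<otimes>\<^bsub>U\<^esub> inv\<^bsub>U\<^esub> (r (\<sigma> <#>\<^bsub>U\<^esub> (A #>\<^bsub>U\<^esub> u))))
       (carrier (U Mod A))"

end

theory Submission
  imports Defs "HOL-Library.Poly_Mapping" "Jordan_Normal_Form.Determinant"
begin

text \<open>
  This is the Artin--Iyanaga determinant argument behind the principal ideal theorem.
  The crossed homomorphism \<open>beta u = u u_\<sigma>\<inverse> + (\<sigma> - 1)\<close>, \<open>\<sigma> = uA\<close>, has image generating \<open>B\<close>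
  as a \<open>\<int>[G]\<close>-module and is a homomorphism modulo \<open>I_G B\<close>, so \<open>L_0 = beta\<inverse>(I_G B)\<close> contains
  \<open>U'\<close>.  Enumerate \<open>U = {u_0, ..., u_(n-1)}\<close> and let \<open>L_(j+1) = \<langle>L_j, u_j\<rangle>\<close> have index \<open>f_j\<close>
  over \<open>L_j\<close>; then \<open>\<Prod> f_j = (U : L_0)\<close>, and \<open>u_j^f_j \<in> L_j\<close> gives relations
  \<open>f_j beta u_j \<in> \<Sum>_(k<j) \<int>[G] beta u_k + I_G B\<close>.  The relation matrix is triangular modulo
  \<open>I_G\<close>, so its determinant \<open>D\<close> has augmentation \<open>\<Prod> f_j\<close>, and \<open>D\<close> annihilates \<open>B\<close> by
  Cramer's rule.  Since \<open>D\<close> kills every \<open>\<sigma> - 1 = beta u_\<sigma>\<close>, it acts on \<open>B\<close> as \<open>c Tr_(B/A)\<close>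
  with \<open>c |G| = (U : L_0)\<close>, i.e. \<open>c = (A : L_0)\<close>, a divisor of \<open>(A : U')\<close>.  The \<open>A\<close>-component
  of \<open>Tr_(B/A) (beta u)\<close> is the transfer of \<open>u\<close>.
\<close>

lemma (in comm_group) finprod_int_pow:
  assumes "f \<in> S \<rightarrow> carrier G" "finite S"
  shows "(finprod G f S) [^] (k::int) = finprod G (\<lambda>i. f i [^] k) S"
  using assms(2,1) by (induct S rule: finite_induct) (simp_all add: Pi_def int_pow_distrib)

lemma (in comm_group) finprod_swap:
  assumes "finite S" "finite T" "\<And>i j. i \<in> S \<Longrightarrow> j \<in> T \<Longrightarrow> f i j \<in> carrier G"
  shows "finprod G (\<lambda>i. finprod G (\<lambda>j. f i j) T) S = finprod G (\<lambda>j. finprod G (\<lambda>i. f i j) S) T"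
  using assms(1,3)
proof (induct S rule: finite_induct)
  case empty thus ?case by (simp add: finprod_one_eqI)
next
  case (insert x F)
  have "finprod G (\<lambda>i. finprod G (f i) T) (insert x F)
      = finprod G (f x) T \<otimes> finprod G (\<lambda>i. finprod G (f i) T) F"
    using insert by (intro finprod_insert) (auto simp: Pi_def)
  also have "\<dots> = finprod G (f x) T \<otimes> finprod G (\<lambda>j. finprod G (\<lambda>i. f i j) F) T"
    using insert by simp
  also have "\<dots> = finprod G (\<lambda>j. f x j \<otimes> finprod G (\<lambda>i. f i j) F) T"
    using insert by (intro finprod_multf[symmetric]) (auto simp: Pi_def)
  also have "\<dots> = finprod G (\<lambda>j. finprod G (\<lambda>i. f i j) (insert x F)) T"
    using insert by (intro finprod_cong) (auto simp: Pi_def)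
  finally show ?case .
qed

lemma (in comm_monoid) finprod_eq_single:
  assumes "finite S" "x \<in> S" "f x \<in> carrier G" "\<And>y. y \<in> S \<Longrightarrow> y \<noteq> x \<Longrightarrow> f y = \<one>"
  shows "finprod G f S = f x"
proof -
  have f: "f \<in> S \<rightarrow> carrier G" using assms by (metis Pi_I one_closed)
  have "finprod G f S = finprod G (\<lambda>j. if x = j then f j else \<one>) S"
    using assms f by (intro finprod_cong) (auto simp: Pi_def simp_implies_def)
  also have "\<dots> = f x" using assms f by (intro finprod_singleton)
  finally show ?thesis .
qed

lemma hom_finprod:
  assumes G: "comm_group G" and H: "comm_group H" and h: "h \<in> hom G H"
    and f: "f \<in> S \<rightarrow> carrier G" and S: "finite S"
  shows "h (finprod G f S) = finprod H (\<lambda>i. h (f i)) S"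
proof -
  interpret G: comm_group G by (rule G)
  interpret H: comm_group H by (rule H)
  interpret group_hom G H h by (simp add: group_hom_def group_hom_axioms_def h G.is_group H.is_group)
  show ?thesis
    using S f by (induct S rule: finite_induct) (simp_all add: Pi_def)
qed

lemma (in group) inv_mult_cancel_left:
  "x \<in> carrier G \<Longrightarrow> y \<in> carrier G \<Longrightarrow> inv x \<otimes> (x \<otimes> y) = y"
  by (simp add: m_assoc[symmetric])

lemma (in group) mult_inv_cancel_left:
  "x \<in> carrier G \<Longrightarrow> y \<in> carrier G \<Longrightarrow> x \<otimes> (inv x \<otimes> y) = y"
  by (simp add: m_assoc[symmetric])

lemma (in group) mult_inv_trans:
  "x \<in> carrier G \<Longrightarrow> y \<in> carrier G \<Longrightarrow> z \<in> carrier G \<Longrightarrow>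
    (x \<otimes> inv y) \<otimes> (y \<otimes> inv z) = x \<otimes> inv z"
  by (simp add: m_assoc inv_mult_cancel_left)

lemma (in group) inv_mult_inv:
  "x \<in> carrier G \<Longrightarrow> y \<in> carrier G \<Longrightarrow> inv (x \<otimes> inv y) = y \<otimes> inv x"
  by (simp add: inv_mult_group)

lemma (in comm_group) mult_inv_mult:
  "x \<in> carrier G \<Longrightarrow> x' \<in> carrier G \<Longrightarrow> y \<in> carrier G \<Longrightarrow> y' \<in> carrier G \<Longrightarrow>
    (x \<otimes> x') \<otimes> inv (y \<otimes> y') = (x \<otimes> inv y) \<otimes> (x' \<otimes> inv y')"
  by (simp add: inv_mult m_ac)

lemma (in group) conj_mem_if_derived_subset:
  assumes S: "subgroup S G" and dS: "derived G (carrier G) \<subseteq> S"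
    and x: "x \<in> carrier G" and s: "s \<in> S"
  shows "x \<otimes> s \<otimes> inv x \<in> S"
proof -
  have sG: "s \<in> carrier G" using s subgroup.subset[OF S] by auto
  have "x \<otimes> s \<otimes> inv x \<otimes> inv s \<in> derived G (carrier G)"
    using x sG unfolding derived_def by (intro generate.incl) blast
  hence "(x \<otimes> s \<otimes> inv x \<otimes> inv s) \<otimes> s \<in> S"
    using dS s subgroup.m_closed[OF S] by blast
  thus ?thesis using x sG by (simp add: m_assoc)
qed

section \<open>Adjoining one element to a subgroup containing the commutators\<close>

context group
begin

lemma mult_pow_mem_image_below:
  fixes f :: nat
  assumes S: "subgroup S G" and u: "u \<in> carrier G" and f: "0 < f" "u [^] f \<in> S" and s: "s \<in> S"
  shows "s \<otimes> u [^] (n::nat) \<in> (\<lambda>(s, i). s \<otimes> u [^] i) ` (S \<times> {..<f})"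
proof -
  have sG: "s \<in> carrier G" using s subgroup.subset[OF S] by auto
  have "u [^] (f * (n div f)) = (u [^] f) [^] (n div f)" using u by (simp add: nat_pow_pow)
  also have "\<dots> \<in> S" using subgroup_int_pow_closed[OF S f(2), of "int (n div f)"] by (simp add: int_pow_int)
  finally have "s \<otimes> u [^] (f * (n div f)) \<in> S" using s subgroup.m_closed[OF S] by blast
  moreover have "u [^] n = u [^] (f * (n div f)) \<otimes> u [^] (n mod f)"
    using u by (simp add: nat_pow_mult)
  hence "s \<otimes> u [^] n = (s \<otimes> u [^] (f * (n div f))) \<otimes> u [^] (n mod f)"
    using u sG by (simp add: m_assoc)
  moreover have "n mod f < f" using f by simp
  ultimately show ?thesis by force
qed

lemma mult_pow_image_subgroup:
  assumes fin: "finite (carrier G)" and S: "subgroup S G" and dS: "derived G (carrier G) \<subseteq> S"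
    and u: "u \<in> carrier G" and f: "0 < (f::nat)" "u [^] f \<in> S"
  shows "subgroup ((\<lambda>(s, i). s \<otimes> u [^] (i::nat)) ` (S \<times> {..<f})) G"
    (is "subgroup ?T G")
proof (rule subgroupI)
  interpret S: subgroup S G by (rule S)
  note red = mult_pow_mem_image_below[OF S u f]
  show "?T \<subseteq> carrier G" using S.subset u by auto
  show "?T \<noteq> {}" using red[OF S.one_closed, of 0] by blast
next
  interpret S: subgroup S G by (rule S)
  note red = mult_pow_mem_image_below[OF S u f]
  fix a assume "a \<in> ?T"
  then obtain s i where si: "s \<in> S" "a = s \<otimes> u [^] (i::nat)" by auto
  have sG: "s \<in> carrier G" using si S.subset by auto
  have "u [^] (ord u * i - i) \<otimes> u [^] i = u [^] (ord u * i)"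
    using ord_ge_1[OF fin u] u by (simp add: nat_pow_mult add.commute mult_le_mono1)
  also have "\<dots> = \<one>" using u by (simp add: nat_pow_pow[symmetric])
  finally have im: "inv (u [^] i) = u [^] (ord u * i - i)" using u by (simp add: inv_equality)
  have "inv a = (inv (u [^] i) \<otimes> inv s \<otimes> inv (inv (u [^] i))) \<otimes> u [^] (ord u * i - i)"
    using si sG u im by (simp add: inv_mult_group m_assoc)
  moreover have "inv (u [^] i) \<otimes> inv s \<otimes> inv (inv (u [^] i)) \<in> S"
    using conj_mem_if_derived_subset[OF S dS, of "inv (u [^] i)" "inv s"] si u by simp
  ultimately show "inv a \<in> ?T" using red by simp
next
  interpret S: subgroup S G by (rule S)
  note red = mult_pow_mem_image_below[OF S u f]
  fix a b assume "a \<in> ?T" "b \<in> ?T"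
  then obtain s i s' j where si: "s \<in> S" "a = s \<otimes> u [^] (i::nat)"
    and sj: "s' \<in> S" "b = s' \<otimes> u [^] (j::nat)" by auto
  have sG: "s \<in> carrier G" "s' \<in> carrier G" using si sj S.subset by auto
  have "a \<otimes> b = (s \<otimes> (u [^] i \<otimes> s' \<otimes> inv (u [^] i))) \<otimes> u [^] (i + j)"
    using si sj sG u by (simp add: m_assoc nat_pow_mult[symmetric] inv_mult_cancel_left)
  moreover have "s \<otimes> (u [^] i \<otimes> s' \<otimes> inv (u [^] i)) \<in> S"
    using conj_mem_if_derived_subset[OF S dS, of "u [^] i" s'] si sj u by simp
  ultimately show "a \<otimes> b \<in> ?T" using red by simp
qed

lemma generate_insert_eq_mult_pow_image:
  assumes fin: "finite (carrier G)" and S: "subgroup S G" and dS: "derived G (carrier G) \<subseteq> S"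
    and u: "u \<in> carrier G" and f: "0 < (f::nat)" "u [^] f \<in> S"
  shows "generate G (S \<union> {u}) = (\<lambda>(s, i). s \<otimes> u [^] (i::nat)) ` (S \<times> {..<f})"
    (is "_ = ?T")
proof
  note red = mult_pow_mem_image_below[OF S u f]
  have "s \<in> ?T" if "s \<in> S" for s
    using red[OF that, of 0] that subgroup.subset[OF S] by (simp add: subsetD)
  moreover have "u \<in> ?T" using red[OF subgroup.one_closed[OF S], of 1] u by simp
  ultimately show "generate G (S \<union> {u}) \<subseteq> ?T"
    by (intro generate_subgroup_incl mult_pow_image_subgroup[OF fin S dS u f]) auto
next
  have SuG: "S \<union> {u} \<subseteq> carrier G" using subgroup.subset[OF S] u by blast
  interpret T: subgroup "generate G (S \<union> {u})" G by (rule generate_is_subgroup[OF SuG])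
  have "u [^] i \<in> generate G (S \<union> {u})" for i :: nat
    using subgroup_int_pow_closed[OF T.subgroup_axioms, of u "int i"] by (simp add: generate.incl int_pow_int)
  moreover have "s \<in> generate G (S \<union> {u})" if "s \<in> S" for s using that by (simp add: generate.incl)
  ultimately show "?T \<subseteq> generate G (S \<union> {u})"
    by (auto intro!: T.m_closed simp del: Un_insert_right)
qed

lemma inj_on_mult_pow:
  assumes S: "subgroup S G" and u: "u \<in> carrier G"
    and least: "\<And>i. 0 < i \<Longrightarrow> i < (f::nat) \<Longrightarrow> u [^] i \<notin> S"
  shows "inj_on (\<lambda>(s, i). s \<otimes> u [^] (i::nat)) (S \<times> {..<f})"
proof -
  interpret S: subgroup S G by (rule S)
  have *: "i = j \<and> s = s'"
    if "s \<in> S" "s' \<in> S" "i \<le> j" "j < f" "s \<otimes> u [^] (i::nat) = s' \<otimes> u [^] (j::nat)" for s s' i j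
  proof -
    have sG: "s \<in> carrier G" "s' \<in> carrier G" using that S.subset by auto
    have "s \<otimes> u [^] i = (s' \<otimes> u [^] (j - i)) \<otimes> u [^] i"
      using that sG u by (simp add: m_assoc nat_pow_mult)
    hence e: "s = s' \<otimes> u [^] (j - i)" using sG u by simp
    hence "u [^] (j - i) = inv s' \<otimes> s" using sG u by (simp add: m_assoc[symmetric])
    hence "u [^] (j - i) \<in> S" using that by simp
    hence "i = j" using least[of "j - i"] that by (cases "j - i = 0") auto
    thus ?thesis using e sG by simp
  qed
  show ?thesis
  proof (rule inj_onI, clarify)
    fix s i s' j assume "s \<in> S" "i < f" "s' \<in> S" "j < f" "s \<otimes> u [^] i = s' \<otimes> u [^] j"
    thus "s = s' \<and> i = j" using *[of s s' i j] *[of s' s j i] by (cases "i \<le> j") auto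
  qed
qed

lemma card_generate_insert:
  assumes fin: "finite (carrier G)" and S: "subgroup S G" and dS: "derived G (carrier G) \<subseteq> S"
    and u: "u \<in> carrier G"
  shows "card (generate G (S \<union> {u})) = (LEAST f::nat. 0 < f \<and> u [^] f \<in> S) * card S"
proof -
  define f where "f = (LEAST f::nat. 0 < f \<and> u [^] f \<in> S)"
  have "0 < ord u \<and> u [^] ord u \<in> S"
    using ord_ge_1[OF fin u] pow_ord_eq_1[OF u] subgroup.one_closed[OF S] by simp
  hence f: "0 < f" "u [^] f \<in> S" unfolding f_def by (metis (mono_tags, lifting) LeastI)+
  have least: "u [^] i \<notin> S" if "0 < i" "i < f" for i
    using that not_less_Least unfolding f_def by blast
  have "card (generate G (S \<union> {u})) = card (S \<times> {..<f})"
    unfolding generate_insert_eq_mult_pow_image[OF fin S dS u f]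
    by (rule card_image[OF inj_on_mult_pow[OF S u least]])
  thus ?thesis by (simp add: f_def card_cartesian_product)
qed

end

locale comm_ring_action = comm_group M for M :: "('m, 'c) monoid_scheme" (structure) +
  fixes ract :: "'r::comm_ring_1 \<Rightarrow> 'm \<Rightarrow> 'm"
  assumes ract_closed [simp]: "x \<in> carrier M \<Longrightarrow> ract p x \<in> carrier M"
    and ract_add: "x \<in> carrier M \<Longrightarrow> ract (p + q) x = ract p x \<otimes> ract q x"
    and ract_mult: "x \<in> carrier M \<Longrightarrow> y \<in> carrier M \<Longrightarrow> ract p (x \<otimes> y) = ract p x \<otimes> ract p y"
    and ract_times: "x \<in> carrier M \<Longrightarrow> ract (p * q) x = ract p (ract q x)"
    and ract_1: "x \<in> carrier M \<Longrightarrow> ract 1 x = x"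
begin

lemma ract_zero [simp]: "x \<in> carrier M \<Longrightarrow> ract 0 x = \<one>"
  using ract_add[of x 0 0] by (simp add: r_cancel_one')

lemma ract_uminus: "x \<in> carrier M \<Longrightarrow> ract (- p) x = inv (ract p x)"
proof -
  assume x: "x \<in> carrier M"
  hence "ract (- p) x \<otimes> ract p x = \<one>" using ract_add[of x "- p" p] by simp
  thus ?thesis using x by (simp add: inv_equality)
qed

lemma ract_diff: "x \<in> carrier M \<Longrightarrow> ract (p - q) x = ract p x \<otimes> inv (ract q x)"
  using ract_add[of x p "- q"] by (simp add: ract_uminus)

lemma ract_of_nat: "x \<in> carrier M \<Longrightarrow> ract (of_nat n) x = x [^] n"
  by (induct n) (simp_all add: ract_add ract_1 m_comm)

lemma ract_hom: "ract p \<in> hom M M"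
  by (rule homI) (simp_all add: ract_mult)

lemma ract_one [simp]: "ract p \<one> = \<one>"
  using group_hom.hom_one[of M M "ract p"] ract_hom by (simp add: group_hom_def group_hom_axioms_def)

lemma ract_finprod:
  "finite I \<Longrightarrow> f \<in> I \<rightarrow> carrier M \<Longrightarrow> ract p (finprod M f I) = finprod M (\<lambda>i. ract p (f i)) I"
  by (rule hom_finprod[OF comm_group_axioms comm_group_axioms ract_hom])

lemma ract_sum:
  "finite I \<Longrightarrow> x \<in> carrier M \<Longrightarrow> ract (\<Sum>i\<in>I. p i) x = finprod M (\<lambda>i. ract (p i) x) I"
  by (induct I rule: finite_induct) (simp_all add: ract_add Pi_def)

text \<open>Cramer's rule: the determinant of a relation matrix annihilates the generators.\<close>
lemma det_ract_eq_one:
  fixes R :: "'r mat"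
  assumes R: "R \<in> carrier_mat n n" and g: "\<And>k. k < n \<Longrightarrow> g k \<in> carrier M"
    and rel: "\<And>j. j < n \<Longrightarrow> finprod M (\<lambda>k. ract (R $$ (j, k)) (g k)) {0..<n} = \<one>"
    and l: "l < n"
  shows "ract (det R) (g l) = \<one>"
proof -
  define C where "C = adj_mat R"
  have C: "C \<in> carrier_mat n n" and CR: "C * R = det R \<cdot>\<^sub>m 1\<^sub>m n"
    using adj_mat[OF R] by (auto simp: C_def)
  have adj: "(\<Sum>j\<in>{0..<n}. C $$ (l, j) * R $$ (j, k)) = (if l = k then det R else 0)"
    if k: "k < n" for k
  proof -
    have "(C * R) $$ (l, k) = (\<Sum>j\<in>{0..<n}. C $$ (l, j) * R $$ (j, k))"
      using C R l k by (simp add: index_mult_mat scalar_prod_def)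
    thus ?thesis using CR l k by (cases "l = k") simp_all
  qed
  have "ract (det R) (g l) = finprod M (\<lambda>k. ract (if l = k then det R else 0) (g k)) {0..<n}"
    using l g by (subst finprod_eq_single[of _ l]) auto
  also have "\<dots> = finprod M (\<lambda>k. finprod M (\<lambda>j. ract (C $$ (l, j)) (ract (R $$ (j, k)) (g k))) {0..<n}) {0..<n}"
    using g by (intro finprod_cong') (auto simp: adj[symmetric] ract_sum ract_times)
  also have "\<dots> = finprod M (\<lambda>j. ract (C $$ (l, j)) (finprod M (\<lambda>k. ract (R $$ (j, k)) (g k)) {0..<n})) {0..<n}"
    using g by (subst finprod_swap) (auto intro!: finprod_cong' simp: ract_finprod)
  also have "\<dots> = \<one>"
    by (intro finprod_one_eqI) (simp add: rel)
  finally show ?thesis .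
qed

end

declare mult_FactGroup [simp del]

locale abelian_normal_transversal =
  fixes U :: "'a monoid" (structure) and A :: "'a set" and r :: "'a set \<Rightarrow> 'a"
  assumes group_U: "group U" and finite_U: "finite (carrier U)" and normal_A: "A \<lhd> U"
    and A_comm: "\<forall>x\<in>A. \<forall>y\<in>A. x \<otimes> y = y \<otimes> x" and derived_subset: "derived U (carrier U) \<subseteq> A"
    and r_mem: "\<forall>\<sigma>\<in>carrier (U Mod A). r \<sigma> \<in> \<sigma>" and r_A: "r A = \<one>"

sublocale abelian_normal_transversal \<subseteq> normal A U by (rule normal_A)

context abelian_normal_transversal
begin

abbreviation G where "G \<equiv> U Mod A"
abbreviation fac where "fac \<sigma> \<tau> \<equiv> cocycle U A r \<sigma> \<tau>"
abbreviation prodA where "prodA f \<equiv> finprod (subA U A) f (carrier G)"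

definition conjg :: "'a \<Rightarrow> 'a \<Rightarrow> 'a" where "conjg x a = x \<otimes> a \<otimes> inv x"

lemma A_subset: "A \<subseteq> carrier U" using subset .

lemma carrier_G_iff: "\<sigma> \<in> carrier G \<longleftrightarrow> (\<exists>x\<in>carrier U. \<sigma> = A #> x)"
  by (auto simp: FactGroup_def RCOSETS_def)

lemma rcos_in_G: "x \<in> carrier U \<Longrightarrow> A #> x \<in> carrier G"
  using carrier_G_iff by auto

lemma finite_G: "finite (carrier G)"
proof -
  have "carrier G = (\<lambda>x. A #> x) ` carrier U" by (auto simp: carrier_G_iff)
  thus ?thesis using finite_U by simp
qed

lemma rcos_eq_iff: "x \<in> carrier U \<Longrightarrow> y \<in> carrier U \<Longrightarrow> A #> x = A #> y \<longleftrightarrow> x \<otimes> inv y \<in> A"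
  by (metis rcos_module_imp[OF is_group] rcos_module_rev[OF is_group] rcos_self[OF _ subgroup_axioms]
        repr_independence[OF _ _ subgroup_axioms])

lemma r_closed: "\<sigma> \<in> carrier G \<Longrightarrow> r \<sigma> \<in> carrier U"
  using r_mem carrier_G_iff by (metis elemrcos_carrier is_group)

lemma rcos_r: "\<sigma> \<in> carrier G \<Longrightarrow> A #> r \<sigma> = \<sigma>"
  using r_mem carrier_G_iff repr_independence[OF _ _ subgroup_axioms] by metis

lemma G_mult: "x \<in> carrier U \<Longrightarrow> y \<in> carrier U \<Longrightarrow> (A #> x) \<otimes>\<^bsub>G\<^esub> (A #> y) = A #> (x \<otimes> y)"
  by (simp add: rcos_sum mult_FactGroup)

lemma comm_group_G: "comm_group G"
proof (rule group.group_comm_groupI[OF factorgroup_is_group])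
  fix s t assume "s \<in> carrier G" "t \<in> carrier G"
  then obtain x y where x: "x \<in> carrier U" "s = A #> x" and y: "y \<in> carrier U" "t = A #> y"
    using carrier_G_iff by auto
  have "x \<otimes> y \<otimes> inv x \<otimes> inv y \<in> derived U (carrier U)"
    using x y unfolding derived_def by (intro generate.incl) blast
  hence "(x \<otimes> y) \<otimes> inv (y \<otimes> x) \<in> A" using derived_subset x y by (auto simp: inv_mult_group m_assoc)
  thus "s \<otimes>\<^bsub>G\<^esub> t = t \<otimes>\<^bsub>G\<^esub> s" using x y rcos_eq_iff G_mult by simp
qed

lemma comm_group_A: "comm_group (subA U A)"
  using subgroup_imp_group[OF subgroup_axioms] A_comm by (intro group.group_comm_groupI) auto

end

sublocale abelian_normal_transversal \<subseteq> Ab: comm_group "subA U A"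
  rewrites "carrier (subA U A) = A" and "monoid.mult (subA U A) = monoid.mult U"
    and "one (subA U A) = one U"
  by (simp_all add: comm_group_A)

sublocale abelian_normal_transversal \<subseteq> G: comm_group "U Mod A"
  by (rule comm_group_G)

context abelian_normal_transversal
begin

lemma G_one_mult [simp]: "a \<in> carrier G \<Longrightarrow> A \<otimes>\<^bsub>G\<^esub> a = a"
  using G.l_one by simp

lemma G_mult_one [simp]: "a \<in> carrier G \<Longrightarrow> a \<otimes>\<^bsub>G\<^esub> A = a"
  using G.r_one by simp

lemma A_in_G [simp]: "A \<in> carrier G"
  using G.one_closed by simp

lemma fac_eq: "fac \<sigma> \<tau> = r \<sigma> \<otimes> r \<tau> \<otimes> inv (r (\<sigma> \<otimes>\<^bsub>G\<^esub> \<tau>))"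
  by (simp add: cocycle_def mult_FactGroup)

lemma fac_mem: "\<sigma> \<in> carrier G \<Longrightarrow> \<tau> \<in> carrier G \<Longrightarrow> fac \<sigma> \<tau> \<in> A"
proof -
  assume s: "\<sigma> \<in> carrier G" and t: "\<tau> \<in> carrier G"
  have st: "\<sigma> \<otimes>\<^bsub>G\<^esub> \<tau> \<in> carrier G" using s t by simp
  have "A #> (r \<sigma> \<otimes> r \<tau>) = A #> r (\<sigma> \<otimes>\<^bsub>G\<^esub> \<tau>)"
    using G_mult[OF r_closed[OF s] r_closed[OF t]] rcos_r s t st by simp
  thus ?thesis using rcos_eq_iff r_closed s t st by (simp add: fac_eq)
qed

lemma fac_one_left: "\<tau> \<in> carrier G \<Longrightarrow> fac A \<tau> = \<one>"
  by (simp add: fac_eq r_A r_closed)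

lemma fac_one_right: "\<sigma> \<in> carrier G \<Longrightarrow> fac \<sigma> A = \<one>"
  by (simp add: fac_eq r_A r_closed)

lemma int_pow_mem_A: "a \<in> A \<Longrightarrow> a [^] (k::int) \<in> A"
  by (rule subgroup_int_pow_closed[OF subgroup_axioms])

lemma fac_pow_mem: "\<sigma> \<in> carrier G \<Longrightarrow> \<tau> \<in> carrier G \<Longrightarrow> fac \<sigma> \<tau> [^] (k::int) \<in> A"
  by (rule int_pow_mem_A[OF fac_mem])

lemma int_pow_mult_A: "a \<in> A \<Longrightarrow> a [^] (i + j :: int) = a [^] i \<otimes> a [^] j"
  using A_subset by (simp add: int_pow_mult subsetD)

lemma int_pow_distrib_A: "a \<in> A \<Longrightarrow> b \<in> A \<Longrightarrow> (a \<otimes> b) [^] (i :: int) = a [^] i \<otimes> b [^] i"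
  using A_subset A_comm by (intro int_pow_mult_distrib) (auto simp: subsetD)

lemma r_mult_r: "\<sigma> \<in> carrier G \<Longrightarrow> \<tau> \<in> carrier G \<Longrightarrow> r \<sigma> \<otimes> r \<tau> = fac \<sigma> \<tau> \<otimes> r (\<sigma> \<otimes>\<^bsub>G\<^esub> \<tau>)"
  by (simp add: fac_eq m_assoc r_closed)

lemma conjg_mem: "x \<in> carrier U \<Longrightarrow> a \<in> A \<Longrightarrow> conjg x a \<in> A"
  unfolding conjg_def by (rule inv_op_closed2)

lemma conjg_hom: "x \<in> carrier U \<Longrightarrow> conjg x \<in> hom U U"
  unfolding conjg_def hom_def by (auto simp: m_assoc) (simp add: m_assoc[symmetric])

lemma conjg_mult: "x \<in> carrier U \<Longrightarrow> a \<in> carrier U \<Longrightarrow> b \<in> carrier U \<Longrightarrow>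
    conjg x (a \<otimes> b) = conjg x a \<otimes> conjg x b"
  using conjg_hom by (simp add: hom_mult)

lemma conjg_int_pow: "x \<in> carrier U \<Longrightarrow> a \<in> carrier U \<Longrightarrow> conjg x (a [^] (k::int)) = conjg x a [^] k"
  using hom_int_pow[OF conjg_hom _ is_group is_group] by simp

lemma conjg_finprod: "x \<in> carrier U \<Longrightarrow> f \<in> S \<rightarrow> A \<Longrightarrow> finite S \<Longrightarrow>
    conjg x (finprod (subA U A) f S) = finprod (subA U A) (\<lambda>i. conjg x (f i)) S"
  using conjg_mem conjg_mult A_subset
  by (intro hom_finprod[OF comm_group_A comm_group_A]) (auto simp: hom_def Pi_def subsetD)

lemma conjg_mult_left: "x \<in> carrier U \<Longrightarrow> y \<in> carrier U \<Longrightarrow> a \<in> carrier U \<Longrightarrow>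
    conjg (x \<otimes> y) a = conjg x (conjg y a)"
  by (simp add: conjg_def m_assoc inv_mult_group)

lemma conjg_A_A: "c \<in> A \<Longrightarrow> y \<in> A \<Longrightarrow> conjg c y = y"
  using A_comm A_subset unfolding conjg_def by (metis inv_solve_right m_closed subsetD)

text \<open>Conjugation by the representatives is an action of \<open>G\<close> on \<open>A\<close>, because the factors
  \<open>fac \<sigma> \<tau> \<in> A\<close> act trivially.\<close>
lemma conjg_conjg_r: "\<sigma> \<in> carrier G \<Longrightarrow> \<tau> \<in> carrier G \<Longrightarrow> a \<in> A \<Longrightarrow>
    conjg (r \<sigma>) (conjg (r \<tau>) a) = conjg (r (\<sigma> \<otimes>\<^bsub>G\<^esub> \<tau>)) a"
proof -
  assume s: "\<sigma> \<in> carrier G" and t: "\<tau> \<in> carrier G" and a: "a \<in> A"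
  have st: "\<sigma> \<otimes>\<^bsub>G\<^esub> \<tau> \<in> carrier G" using s t by simp
  have aU: "a \<in> carrier U" using a A_subset by auto
  have "conjg (r \<sigma>) (conjg (r \<tau>) a) = conjg (fac \<sigma> \<tau> \<otimes> r (\<sigma> \<otimes>\<^bsub>G\<^esub> \<tau>)) a"
    using s t aU r_closed by (simp add: conjg_mult_left[symmetric] r_mult_r)
  also have "\<dots> = conjg (fac \<sigma> \<tau>) (conjg (r (\<sigma> \<otimes>\<^bsub>G\<^esub> \<tau>)) a)"
    using fac_mem[OF s t] A_subset r_closed[OF st] aU by (intro conjg_mult_left) auto
  also have "\<dots> = conjg (r (\<sigma> \<otimes>\<^bsub>G\<^esub> \<tau>)) a"
    using fac_mem[OF s t] conjg_mem[OF r_closed[OF st] a] by (rule conjg_A_A)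
  finally show ?thesis .
qed

lemma fac_cocycle: "\<sigma> \<in> carrier G \<Longrightarrow> \<tau> \<in> carrier G \<Longrightarrow> \<rho> \<in> carrier G \<Longrightarrow>
    conjg (r \<sigma>) (fac \<tau> \<rho>) \<otimes> fac \<sigma> (\<tau> \<otimes>\<^bsub>G\<^esub> \<rho>) = fac \<sigma> \<tau> \<otimes> fac (\<sigma> \<otimes>\<^bsub>G\<^esub> \<tau>) \<rho>"
proof -
  assume s: "\<sigma> \<in> carrier G" and t: "\<tau> \<in> carrier G" and p: "\<rho> \<in> carrier G"
  have e: "\<sigma> \<otimes>\<^bsub>G\<^esub> (\<tau> \<otimes>\<^bsub>G\<^esub> \<rho>) = \<sigma> \<otimes>\<^bsub>G\<^esub> \<tau> \<otimes>\<^bsub>G\<^esub> \<rho>" using s t p by (simp add: G.m_assoc)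
  note rs = r_closed[OF s] r_closed[OF t] r_closed[OF p]
    r_closed[OF G.m_closed[OF t p]] r_closed[OF G.m_closed[OF s t]]
    r_closed[OF G.m_closed[OF G.m_closed[OF s t] p]]
  show ?thesis unfolding fac_eq conjg_def e using rs
    by (simp add: m_assoc inv_mult_cancel_left mult_inv_cancel_left)
qed

section \<open>The \<open>G\<close>-module \<open>B\<close>\<close>

abbreviation act where "act \<sigma> b \<equiv> actB U A r \<sigma> b"

lemma augmentation_ideal_iff:
  "x \<in> augmentation_ideal U A \<longleftrightarrow> (\<forall>\<sigma>. \<sigma> \<notin> carrier G \<longrightarrow> x \<sigma> = 0) \<and> (\<Sum>\<sigma>\<in>carrier G. x \<sigma>) = 0"
  by (simp add: augmentation_ideal_def)

lemma modB_iff: "b \<in> modB U A \<longleftrightarrow> fst b \<in> A \<and> snd b \<in> augmentation_ideal U A"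
  by (cases b) (simp add: modB_def)

definition B_grp :: "('a \<times> ('a set \<Rightarrow> int)) monoid" where
  "B_grp = \<lparr>carrier = modB U A, monoid.mult = (\<lambda>b c. (fst b \<otimes> fst c, \<lambda>\<rho>. snd b \<rho> + snd c \<rho>)),
     one = (\<one>, \<lambda>_. 0)\<rparr>"

lemma B_grp_simps:
  "carrier B_grp = modB U A"
  "b \<otimes>\<^bsub>B_grp\<^esub> c = (fst b \<otimes> fst c, \<lambda>\<rho>. snd b \<rho> + snd c \<rho>)"
  "\<one>\<^bsub>B_grp\<^esub> = (\<one>, \<lambda>_. 0)"
  by (simp_all add: B_grp_def)

lemma comm_group_B: "comm_group B_grp"
proof (rule comm_groupI)
  fix x y assume x: "x \<in> carrier B_grp" and y: "y \<in> carrier B_grp"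
  thus "x \<otimes>\<^bsub>B_grp\<^esub> y \<in> carrier B_grp"
    by (auto simp: B_grp_simps modB_iff augmentation_ideal_iff sum.distrib)
  show "x \<otimes>\<^bsub>B_grp\<^esub> y = y \<otimes>\<^bsub>B_grp\<^esub> x" using x y by (auto simp: B_grp_simps modB_iff Ab.m_comm)
next
  show "\<one>\<^bsub>B_grp\<^esub> \<in> carrier B_grp" by (simp add: B_grp_simps modB_iff augmentation_ideal_iff)
next
  fix x y z assume "x \<in> carrier B_grp" "y \<in> carrier B_grp" "z \<in> carrier B_grp"
  thus "x \<otimes>\<^bsub>B_grp\<^esub> y \<otimes>\<^bsub>B_grp\<^esub> z = x \<otimes>\<^bsub>B_grp\<^esub> (y \<otimes>\<^bsub>B_grp\<^esub> z)"
    by (auto simp: B_grp_simps modB_iff Ab.m_assoc add.assoc)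
next
  fix x assume "x \<in> carrier B_grp"
  thus "\<one>\<^bsub>B_grp\<^esub> \<otimes>\<^bsub>B_grp\<^esub> x = x" by (auto simp: B_grp_simps modB_iff)
next
  fix x assume x: "x \<in> carrier B_grp"
  have "(inv (fst x), \<lambda>\<rho>. - snd x \<rho>) \<in> carrier B_grp"
    using x by (auto simp: B_grp_simps modB_iff augmentation_ideal_iff sum_negf)
  moreover have "(inv (fst x), \<lambda>\<rho>. - snd x \<rho>) \<otimes>\<^bsub>B_grp\<^esub> x = \<one>\<^bsub>B_grp\<^esub>"
    using x A_subset by (auto simp: B_grp_simps modB_iff)
  ultimately show "\<exists>y\<in>carrier B_grp. y \<otimes>\<^bsub>B_grp\<^esub> x = \<one>\<^bsub>B_grp\<^esub>" by blast
qed

end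

sublocale abelian_normal_transversal \<subseteq> B: comm_group B_grp
  rewrites "carrier B_grp = modB U A"
  by (simp_all add: comm_group_B B_grp_simps)

context abelian_normal_transversal
begin

lemma B_int_pow: "b \<in> modB U A \<Longrightarrow> b [^]\<^bsub>B_grp\<^esub> (k::int) = (fst b [^] k, \<lambda>\<rho>. k * snd b \<rho>)"
proof -
  assume b: "b \<in> modB U A"
  have fb: "fst b \<in> carrier U" using b A_subset by (auto simp: modB_iff)
  have nat: "b [^]\<^bsub>B_grp\<^esub> n = (fst b [^] n, \<lambda>\<rho>. int n * snd b \<rho>)" for n :: nat
    using b A_subset by (induct n) (auto simp: B_grp_simps modB_iff subsetD algebra_simps)
  have inv: "inv\<^bsub>B_grp\<^esub> (fst b [^] n, \<lambda>\<rho>. int n * snd b \<rho>) = (inv (fst b [^] n), \<lambda>\<rho>. - (int n * snd b \<rho>))"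
    for n :: nat
  proof (rule B.inv_equality)
    show "(fst b [^] n, \<lambda>\<rho>. int n * snd b \<rho>) \<in> modB U A" using b by (simp flip: nat)
    thus "(inv (fst b [^] n), \<lambda>\<rho>. - (int n * snd b \<rho>)) \<in> modB U A"
      by (auto simp: modB_iff augmentation_ideal_iff sum_negf)
    show "(inv (fst b [^] n), \<lambda>\<rho>. - (int n * snd b \<rho>)) \<otimes>\<^bsub>B_grp\<^esub> (fst b [^] n, \<lambda>\<rho>. int n * snd b \<rho>) = \<one>\<^bsub>B_grp\<^esub>"
      using fb by (simp add: B_grp_simps)
  qed
  consider (nonneg) n where "k = int n" | (neg) n where "k = - int n" by (rule int_cases2)
  thus ?thesis
  proof cases
    case (nonneg n) thus ?thesis using nat by (simp add: int_pow_int)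
  next
    case (neg n)
    hence "b [^]\<^bsub>B_grp\<^esub> k = inv\<^bsub>B_grp\<^esub> (b [^]\<^bsub>B_grp\<^esub> n)" using b by (simp add: B.int_pow_neg_int)
    thus ?thesis using inv nat fb neg by (simp add: int_pow_neg_int)
  qed
qed

lemma finprod_B:
  "finite I \<Longrightarrow> (\<And>i. i \<in> I \<Longrightarrow> f i \<in> modB U A) \<Longrightarrow>
   finprod B_grp f I = (finprod (subA U A) (\<lambda>i. fst (f i)) I, \<lambda>\<rho>. \<Sum>i\<in>I. snd (f i) \<rho>)"
proof (induct I rule: finite_induct)
  case empty thus ?case by (simp add: B_grp_simps)
next
  case (insert x F)
  hence "fst (f x) \<in> A" by (simp add: modB_iff)
  with insert show ?case by (simp add: B_grp_simps Ab.finprod_insert Pi_def modB_iff)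
qed

lemma actB_fst: "fst (act \<sigma> b) = conjg (r \<sigma>) (fst b) \<otimes> prodA (\<lambda>\<tau>. fac \<sigma> \<tau> [^] snd b \<tau>)"
  by (simp add: actB_def conjg_def)

lemma actB_snd: "snd (act \<sigma> b) = (\<lambda>\<rho>. if \<rho> \<in> carrier G then snd b (inv\<^bsub>G\<^esub> \<sigma> \<otimes>\<^bsub>G\<^esub> \<rho>) else 0)"
  by (simp add: actB_def)

lemma G_inv_A [simp]: "inv\<^bsub>G\<^esub> A = A"
  using G.inv_one by simp

lemma bij_betw_G_mult: "c \<in> carrier G \<Longrightarrow> bij_betw (\<lambda>\<rho>. c \<otimes>\<^bsub>G\<^esub> \<rho>) (carrier G) (carrier G)"
  by (rule bij_betw_byWitness[where f'="\<lambda>\<rho>. inv\<^bsub>G\<^esub> c \<otimes>\<^bsub>G\<^esub> \<rho>"])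
     (auto simp: G.m_assoc[symmetric])

lemma act_closed: "\<sigma> \<in> carrier G \<Longrightarrow> b \<in> modB U A \<Longrightarrow> act \<sigma> b \<in> modB U A"
proof -
  assume s: "\<sigma> \<in> carrier G" and b: "b \<in> modB U A"
  have "fst (act \<sigma> b) \<in> A" unfolding actB_fst
    using b s r_closed by (intro Ab.m_closed conjg_mem Ab.finprod_closed) (auto simp: modB_iff fac_pow_mem)
  moreover have "(\<Sum>\<rho>\<in>carrier G. snd (act \<sigma> b) \<rho>) = (\<Sum>\<rho>\<in>carrier G. snd b (inv\<^bsub>G\<^esub> \<sigma> \<otimes>\<^bsub>G\<^esub> \<rho>))"
    by (simp add: actB_snd)
  moreover have "\<dots> = (\<Sum>\<rho>\<in>carrier G. snd b \<rho>)"
    using s by (intro sum.reindex_bij_betw bij_betw_G_mult) simp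
  ultimately show ?thesis using b by (simp add: modB_iff augmentation_ideal_iff actB_snd)
qed

lemma act_mult: "\<sigma> \<in> carrier G \<Longrightarrow> b \<in> modB U A \<Longrightarrow> c \<in> modB U A \<Longrightarrow>
    act \<sigma> (b \<otimes>\<^bsub>B_grp\<^esub> c) = act \<sigma> b \<otimes>\<^bsub>B_grp\<^esub> act \<sigma> c"
proof -
  assume s: "\<sigma> \<in> carrier G" and b: "b \<in> modB U A" and c: "c \<in> modB U A"
  have ba: "fst b \<in> A" and ca: "fst c \<in> A" using b c by (auto simp: modB_iff)
  have "prodA (\<lambda>\<tau>. fac \<sigma> \<tau> [^] (snd b \<tau> + snd c \<tau>))
      = prodA (\<lambda>\<tau>. fac \<sigma> \<tau> [^] snd b \<tau> \<otimes> fac \<sigma> \<tau> [^] snd c \<tau>)"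
    using s by (intro Ab.finprod_cong') (auto simp: int_pow_mult_A fac_mem fac_pow_mem Pi_def)
  also have "\<dots> = prodA (\<lambda>\<tau>. fac \<sigma> \<tau> [^] snd b \<tau>) \<otimes> prodA (\<lambda>\<tau>. fac \<sigma> \<tau> [^] snd c \<tau>)"
    using s by (intro Ab.finprod_multf) (auto simp: fac_pow_mem)
  finally have F: "prodA (\<lambda>\<tau>. fac \<sigma> \<tau> [^] (snd b \<tau> + snd c \<tau>))
      = prodA (\<lambda>\<tau>. fac \<sigma> \<tau> [^] snd b \<tau>) \<otimes> prodA (\<lambda>\<tau>. fac \<sigma> \<tau> [^] snd c \<tau>)" .
  have "prodA (\<lambda>\<tau>. fac \<sigma> \<tau> [^] snd b \<tau>) \<in> A" "prodA (\<lambda>\<tau>. fac \<sigma> \<tau> [^] snd c \<tau>) \<in> A"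
    using s by (auto intro!: Ab.finprod_closed simp: fac_pow_mem)
  moreover have "conjg (r \<sigma>) (fst b) \<in> A" "conjg (r \<sigma>) (fst c) \<in> A"
    using ba ca r_closed[OF s] conjg_mem by auto
  ultimately have "fst (act \<sigma> (b \<otimes>\<^bsub>B_grp\<^esub> c)) = fst (act \<sigma> b \<otimes>\<^bsub>B_grp\<^esub> act \<sigma> c)"
    unfolding actB_fst B_grp_simps fst_conv snd_conv F
    using ba ca A_subset r_closed[OF s] by (simp add: conjg_mult subsetD Ab.m_ac)
  moreover have "snd (act \<sigma> (b \<otimes>\<^bsub>B_grp\<^esub> c)) = snd (act \<sigma> b \<otimes>\<^bsub>B_grp\<^esub> act \<sigma> c)"
    by (auto simp: actB_snd B_grp_simps)
  ultimately show ?thesis by (simp add: prod_eq_iff)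
qed

lemma act_hom: "\<sigma> \<in> carrier G \<Longrightarrow> act \<sigma> \<in> hom B_grp B_grp"
  by (rule homI) (simp_all add: B_grp_simps(1) act_closed act_mult)

lemma act_int_pow: "\<sigma> \<in> carrier G \<Longrightarrow> b \<in> modB U A \<Longrightarrow>
    act \<sigma> (b [^]\<^bsub>B_grp\<^esub> (k::int)) = act \<sigma> b [^]\<^bsub>B_grp\<^esub> k"
  using hom_int_pow[OF act_hom _ B.is_group B.is_group] by (simp add: B_grp_simps)

lemma act_G_one: "b \<in> modB U A \<Longrightarrow> act A b = b"
proof -
  assume b: "b \<in> modB U A"
  have "prodA (\<lambda>\<tau>. fac A \<tau> [^] snd b \<tau>) = \<one>"
    by (rule Ab.finprod_one_eqI) (simp add: fac_one_left)
  hence "fst (act A b) = fst b" using b A_subset by (auto simp: actB_fst conjg_def r_A modB_iff subsetD)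
  moreover have "snd (act A b) = snd b" using b
    by (auto simp: actB_snd modB_iff augmentation_ideal_iff)
  ultimately show ?thesis by (simp add: prod_eq_iff)
qed

lemma finprod_A_int_pow:
  assumes "a \<in> A" "finite S"
  shows "finprod (subA U A) (\<lambda>i. a [^] (k i :: int)) S = a [^] (\<Sum>i\<in>S. k i)"
  using assms(2) by (induct S rule: finite_induct) (simp_all add: assms(1) Pi_def int_pow_mem_A int_pow_mult_A)

text \<open>The key identity behind \<open>act_act\<close>: the cocycle identity, integrated against a
  function of total sum zero, in which the factor \<open>fac \<sigma> \<tau>\<close> cancels.\<close>
lemma prodA_fac_cocycle:
  fixes x :: "'a set \<Rightarrow> int"
  assumes s: "\<sigma> \<in> carrier G" and t: "\<tau> \<in> carrier G" and x: "(\<Sum>\<rho>\<in>carrier G. x \<rho>) = 0"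
  shows "prodA (\<lambda>\<rho>. conjg (r \<sigma>) (fac \<tau> \<rho>) [^] x \<rho>) \<otimes> prodA (\<lambda>\<rho>. fac \<sigma> (\<tau> \<otimes>\<^bsub>G\<^esub> \<rho>) [^] x \<rho>)
       = prodA (\<lambda>\<rho>. fac (\<sigma> \<otimes>\<^bsub>G\<^esub> \<tau>) \<rho> [^] x \<rho>)"
proof -
  have cA: "\<And>\<rho>. \<rho> \<in> carrier G \<Longrightarrow> conjg (r \<sigma>) (fac \<tau> \<rho>) \<in> A"
    using r_closed[OF s] t fac_mem conjg_mem by auto
  have st: "\<sigma> \<otimes>\<^bsub>G\<^esub> \<tau> \<in> carrier G" using s t by simp
  have "prodA (\<lambda>\<rho>. conjg (r \<sigma>) (fac \<tau> \<rho>) [^] x \<rho>) \<otimes> prodA (\<lambda>\<rho>. fac \<sigma> (\<tau> \<otimes>\<^bsub>G\<^esub> \<rho>) [^] x \<rho>)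
      = prodA (\<lambda>\<rho>. conjg (r \<sigma>) (fac \<tau> \<rho>) [^] x \<rho> \<otimes> fac \<sigma> (\<tau> \<otimes>\<^bsub>G\<^esub> \<rho>) [^] x \<rho>)"
    using s t cA by (intro Ab.finprod_multf[symmetric]) (auto simp: int_pow_mem_A fac_pow_mem)
  also have "\<dots> = prodA (\<lambda>\<rho>. (fac \<sigma> \<tau> \<otimes> fac (\<sigma> \<otimes>\<^bsub>G\<^esub> \<tau>) \<rho>) [^] x \<rho>)"
    using s t cA
    by (intro Ab.finprod_cong') (auto simp: int_pow_distrib_A[symmetric] fac_mem fac_cocycle int_pow_mem_A)
  also have "\<dots> = prodA (\<lambda>\<rho>. fac \<sigma> \<tau> [^] x \<rho> \<otimes> fac (\<sigma> \<otimes>\<^bsub>G\<^esub> \<tau>) \<rho> [^] x \<rho>)"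
    using s t st by (intro Ab.finprod_cong') (auto simp: int_pow_distrib_A fac_mem int_pow_mem_A)
  also have "\<dots> = prodA (\<lambda>\<rho>. fac \<sigma> \<tau> [^] x \<rho>) \<otimes> prodA (\<lambda>\<rho>. fac (\<sigma> \<otimes>\<^bsub>G\<^esub> \<tau>) \<rho> [^] x \<rho>)"
    using s t st by (intro Ab.finprod_multf) (auto simp: fac_pow_mem)
  also have "prodA (\<lambda>\<rho>. fac \<sigma> \<tau> [^] x \<rho>) = \<one>"
    using finprod_A_int_pow[OF fac_mem[OF s t] finite_G] x by simp
  finally show ?thesis using st by (auto intro!: Ab.finprod_closed simp: fac_pow_mem A_subset subsetD)
qed

lemma prodA_shift: "c \<in> carrier G \<Longrightarrow> f \<in> carrier G \<rightarrow> A \<Longrightarrow> prodA (\<lambda>\<rho>. f (c \<otimes>\<^bsub>G\<^esub> \<rho>)) = prodA f"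
  using Ab.finprod_reindex[of f "\<lambda>\<rho>. c \<otimes>\<^bsub>G\<^esub> \<rho>" "carrier G"] bij_betw_G_mult[of c]
  by (simp add: bij_betw_def)

lemma act_act: "\<sigma> \<in> carrier G \<Longrightarrow> \<tau> \<in> carrier G \<Longrightarrow> b \<in> modB U A \<Longrightarrow>
    act \<sigma> (act \<tau> b) = act (\<sigma> \<otimes>\<^bsub>G\<^esub> \<tau>) b"
proof -
  assume s: "\<sigma> \<in> carrier G" and t: "\<tau> \<in> carrier G" and b: "b \<in> modB U A"
  define a where "a = fst b"
  define x where "x = snd b"
  have a: "a \<in> A" and x: "(\<Sum>\<rho>\<in>carrier G. x \<rho>) = 0"
    using b by (auto simp: modB_iff augmentation_ideal_iff a_def x_def)
  define P where "P = prodA (\<lambda>\<rho>. fac \<tau> \<rho> [^] x \<rho>)"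
  have PA: "P \<in> A" unfolding P_def using t by (auto intro!: Ab.finprod_closed simp: fac_pow_mem)
  have conjg_P: "conjg (r \<sigma>) P = prodA (\<lambda>\<rho>. conjg (r \<sigma>) (fac \<tau> \<rho>) [^] x \<rho>)"
    unfolding P_def using r_closed[OF s] t finite_G fac_mem A_subset
    by (subst conjg_finprod) (auto intro!: Ab.finprod_cong' simp: fac_pow_mem conjg_int_pow subsetD
        conjg_mem int_pow_mem_A)
  have shift: "prodA (\<lambda>\<rho>. fac \<sigma> \<rho> [^] snd (act \<tau> b) \<rho>) = prodA (\<lambda>\<rho>. fac \<sigma> (\<tau> \<otimes>\<^bsub>G\<^esub> \<rho>) [^] x \<rho>)"
  proof -
    have "prodA (\<lambda>\<rho>. fac \<sigma> \<rho> [^] snd (act \<tau> b) \<rho>) = prodA (\<lambda>\<rho>. fac \<sigma> \<rho> [^] x (inv\<^bsub>G\<^esub> \<tau> \<otimes>\<^bsub>G\<^esub> \<rho>))"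
      using s by (intro Ab.finprod_cong') (auto simp: actB_snd x_def fac_pow_mem)
    also have "\<dots> = prodA (\<lambda>\<rho>. fac \<sigma> (\<tau> \<otimes>\<^bsub>G\<^esub> \<rho>) [^] x (inv\<^bsub>G\<^esub> \<tau> \<otimes>\<^bsub>G\<^esub> (\<tau> \<otimes>\<^bsub>G\<^esub> \<rho>)))"
      using s t by (intro prodA_shift[symmetric]) (auto simp: fac_pow_mem)
    also have "\<dots> = prodA (\<lambda>\<rho>. fac \<sigma> (\<tau> \<otimes>\<^bsub>G\<^esub> \<rho>) [^] x \<rho>)"
      using s t by (intro Ab.finprod_cong') (auto simp: fac_pow_mem G.m_assoc[symmetric])
    finally show ?thesis .
  qed
  have "prodA (\<lambda>\<rho>. fac \<sigma> (\<tau> \<otimes>\<^bsub>G\<^esub> \<rho>) [^] x \<rho>) \<in> A" "conjg (r \<sigma>) P \<in> A"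
    "conjg (r \<sigma>) (conjg (r \<tau>) a) \<in> A"
    using s t a PA r_closed by (auto intro!: Ab.finprod_closed conjg_mem simp: fac_pow_mem)
  hence "fst (act \<sigma> (act \<tau> b)) = conjg (r \<sigma>) (conjg (r \<tau>) a) \<otimes>
      (conjg (r \<sigma>) P \<otimes> prodA (\<lambda>\<rho>. fac \<sigma> (\<tau> \<otimes>\<^bsub>G\<^esub> \<rho>) [^] x \<rho>))"
    using r_closed[OF s] r_closed[OF t] a PA A_subset conjg_mem
    by (simp add: actB_fst[of \<sigma>] shift, simp add: actB_fst a_def x_def P_def conjg_mult subsetD m_assoc)
  also have "\<dots> = fst (act (\<sigma> \<otimes>\<^bsub>G\<^esub> \<tau>) b)"
    using conjg_P prodA_fac_cocycle[OF s t x] conjg_conjg_r[OF s t a] by (simp add: actB_fst a_def x_def)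
  finally have "fst (act \<sigma> (act \<tau> b)) = fst (act (\<sigma> \<otimes>\<^bsub>G\<^esub> \<tau>) b)" .
  moreover have "snd (act \<sigma> (act \<tau> b)) = snd (act (\<sigma> \<otimes>\<^bsub>G\<^esub> \<tau>) b)"
    using s t by (auto simp: actB_snd G.inv_mult_group G.m_assoc)
  ultimately show ?thesis by (simp add: prod_eq_iff)
qed

end

section \<open>The action of the group ring\<close>

lemma poly_mapping_add_induct [case_names zero add]:
  assumes "P 0" "\<And>f a b. P f \<Longrightarrow> P (f + Poly_Mapping.single a b)"
  shows "P f"
proof (induct f rule: update_induct)
  case (update f a b)
  then have "Poly_Mapping.update a b f = f + Poly_Mapping.single a b"
    by (intro poly_mapping_eqI)
       (auto simp: lookup_update lookup_add lookup_single when_def in_keys_iff)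
  with update assms(2) show ?case by simp
qed (simp add: assms(1))

text \<open>There is no group ring type; \<open>\<int>[G]\<close> is replaced by the polynomial ring in
  variables indexed by cosets, acting on \<open>B\<close> through the evaluation of monomials in \<open>G\<close>.\<close>
type_synonym 'a grp_poly = "('a set \<Rightarrow>\<^sub>0 nat) \<Rightarrow>\<^sub>0 int"

context abelian_normal_transversal
begin

definition eval_monom :: "('a set \<Rightarrow>\<^sub>0 nat) \<Rightarrow> 'a set" where
  "eval_monom m = finprod G (\<lambda>\<xi>. \<xi> [^]\<^bsub>G\<^esub> Poly_Mapping.lookup m \<xi>) (carrier G)"

definition coeff_G :: "'a grp_poly \<Rightarrow> 'a set \<Rightarrow> int" where
  "coeff_G p \<sigma> = (\<Sum>m\<in>Poly_Mapping.keys p. if eval_monom m = \<sigma> then Poly_Mapping.lookup p m else 0)"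

definition augm :: "'a grp_poly \<Rightarrow> int" where
  "augm p = (\<Sum>m\<in>Poly_Mapping.keys p. Poly_Mapping.lookup p m)"

definition poly_act :: "'a grp_poly \<Rightarrow> 'a \<times> ('a set \<Rightarrow> int) \<Rightarrow> 'a \<times> ('a set \<Rightarrow> int)" where
  "poly_act p b = finprod B_grp (\<lambda>\<sigma>. act \<sigma> b [^]\<^bsub>B_grp\<^esub> coeff_G p \<sigma>) (carrier G)"

definition gvar :: "'a set \<Rightarrow> 'a grp_poly" where
  "gvar \<xi> = Poly_Mapping.single (Poly_Mapping.single \<xi> 1) 1"

lemma eval_monom_closed [simp]: "eval_monom m \<in> carrier G"
  unfolding eval_monom_def by (auto intro: G.finprod_closed)

lemma eval_monom_add: "eval_monom (m1 + m2) = eval_monom m1 \<otimes>\<^bsub>G\<^esub> eval_monom m2"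
proof -
  have "eval_monom (m1 + m2) = finprod G (\<lambda>\<xi>. \<xi> [^]\<^bsub>G\<^esub> Poly_Mapping.lookup m1 \<xi> \<otimes>\<^bsub>G\<^esub>
      \<xi> [^]\<^bsub>G\<^esub> Poly_Mapping.lookup m2 \<xi>) (carrier G)"
    unfolding eval_monom_def by (intro G.finprod_cong') (auto simp: lookup_add G.nat_pow_mult)
  also have "\<dots> = eval_monom m1 \<otimes>\<^bsub>G\<^esub> eval_monom m2"
    unfolding eval_monom_def by (rule G.finprod_multf) auto
  finally show ?thesis .
qed

lemma eval_monom_zero [simp]: "eval_monom 0 = A"
  unfolding eval_monom_def by (simp add: G.finprod_one_eqI)

lemma eval_monom_single: "\<xi> \<in> carrier G \<Longrightarrow> eval_monom (Poly_Mapping.single \<xi> 1) = \<xi>"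
  unfolding eval_monom_def
  by (subst G.finprod_eq_single[of _ \<xi>]) (auto simp: finite_G lookup_single when_def)

lemma coeff_G_add: "coeff_G (p + q) \<sigma> = coeff_G p \<sigma> + coeff_G q \<sigma>"
  unfolding coeff_G_def by (rule setsum_keys_plus_distrib) auto

lemma coeff_G_single: "coeff_G (Poly_Mapping.single m c) \<sigma> = (if eval_monom m = \<sigma> then c else 0)"
  by (simp add: coeff_G_def)

lemma augm_eq_sum_coeff_G: "augm p = (\<Sum>\<sigma>\<in>carrier G. coeff_G p \<sigma>)"
proof -
  have "(\<Sum>\<sigma>\<in>carrier G. coeff_G p \<sigma>)
      = (\<Sum>m\<in>Poly_Mapping.keys p. \<Sum>\<sigma>\<in>carrier G. if eval_monom m = \<sigma> then Poly_Mapping.lookup p m else 0)"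
    unfolding coeff_G_def by (rule sum.swap)
  also have "\<dots> = augm p"
    unfolding augm_def using finite_G by (intro sum.cong) (auto simp: sum.delta)
  finally show ?thesis ..
qed

lemma augm_add: "augm (p + q) = augm p + augm q"
  unfolding augm_def by (rule setsum_keys_plus_distrib) auto

lemma augm_zero [simp]: "augm 0 = 0"
  by (simp add: augm_def)

lemma augm_single: "augm (Poly_Mapping.single m c) = c"
  by (simp add: augm_def)

lemma augm_times: "augm (p * q) = augm p * augm q"
proof -
  have "augm (Poly_Mapping.single m c * q) = c * augm q" for m c
    by (induct q rule: poly_mapping_add_induct)
       (simp_all add: distrib_left mult_single augm_add augm_single)
  thus ?thesis
    by (induct p rule: poly_mapping_add_induct) (simp_all add: distrib_right augm_add augm_single)
qed

lemma comm_ring_hom_augm: "comm_ring_hom augm"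
proof unfold_locales
  show "augm 1 = 1" by (simp add: augm_def)
qed (simp_all add: augm_add augm_times)

lemma act_int_pow_closed: "\<sigma> \<in> carrier G \<Longrightarrow> b \<in> modB U A \<Longrightarrow> act \<sigma> b [^]\<^bsub>B_grp\<^esub> (k::int) \<in> modB U A"
  using B.int_pow_closed act_closed by simp

lemma poly_act_closed: "b \<in> modB U A \<Longrightarrow> poly_act p b \<in> modB U A"
  unfolding poly_act_def by (intro B.finprod_closed) (simp add: act_int_pow_closed)

lemma poly_act_add: "b \<in> modB U A \<Longrightarrow> poly_act (p + q) b = poly_act p b \<otimes>\<^bsub>B_grp\<^esub> poly_act q b"
proof -
  assume b: "b \<in> modB U A"
  have "poly_act (p + q) b
      = finprod B_grp (\<lambda>\<sigma>. act \<sigma> b [^]\<^bsub>B_grp\<^esub> coeff_G p \<sigma> \<otimes>\<^bsub>B_grp\<^esub> act \<sigma> b [^]\<^bsub>B_grp\<^esub> coeff_G q \<sigma>) (carrier G)"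
    unfolding poly_act_def coeff_G_add
    using b by (intro B.finprod_cong') (simp_all add: act_closed B.int_pow_mult act_int_pow_closed Pi_def)
  also have "\<dots> = poly_act p b \<otimes>\<^bsub>B_grp\<^esub> poly_act q b"
    unfolding poly_act_def using b by (intro B.finprod_multf) (simp_all add: Pi_def act_int_pow_closed)
  finally show ?thesis .
qed

lemma poly_act_mult: "b \<in> modB U A \<Longrightarrow> c \<in> modB U A \<Longrightarrow>
    poly_act p (b \<otimes>\<^bsub>B_grp\<^esub> c) = poly_act p b \<otimes>\<^bsub>B_grp\<^esub> poly_act p c"
proof -
  assume b: "b \<in> modB U A" and c: "c \<in> modB U A"
  have "poly_act p (b \<otimes>\<^bsub>B_grp\<^esub> c)
      = finprod B_grp (\<lambda>\<sigma>. act \<sigma> b [^]\<^bsub>B_grp\<^esub> coeff_G p \<sigma> \<otimes>\<^bsub>B_grp\<^esub> act \<sigma> c [^]\<^bsub>B_grp\<^esub> coeff_G p \<sigma>) (carrier G)"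
    unfolding poly_act_def using b c
    by (intro B.finprod_cong') (simp_all add: act_mult act_closed B.int_pow_distrib act_int_pow_closed Pi_def)
  also have "\<dots> = poly_act p b \<otimes>\<^bsub>B_grp\<^esub> poly_act p c"
    unfolding poly_act_def using b c by (intro B.finprod_multf) (simp_all add: Pi_def act_int_pow_closed)
  finally show ?thesis .
qed

lemma poly_act_zero: "poly_act 0 b = \<one>\<^bsub>B_grp\<^esub>"
  unfolding poly_act_def coeff_G_def by (simp add: B.finprod_one_eqI)

lemma poly_act_single: "b \<in> modB U A \<Longrightarrow> poly_act (Poly_Mapping.single m c) b = act (eval_monom m) b [^]\<^bsub>B_grp\<^esub> c"
  unfolding poly_act_def coeff_G_single
  by (subst B.finprod_eq_single[of _ "eval_monom m"]) (auto simp: finite_G act_int_pow_closed)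

lemma poly_act_one: "poly_act p \<one>\<^bsub>B_grp\<^esub> = \<one>\<^bsub>B_grp\<^esub>"
proof -
  have "poly_act p \<one>\<^bsub>B_grp\<^esub> \<otimes>\<^bsub>B_grp\<^esub> poly_act p \<one>\<^bsub>B_grp\<^esub> = poly_act p \<one>\<^bsub>B_grp\<^esub>"
    using poly_act_mult[of "\<one>\<^bsub>B_grp\<^esub>" "\<one>\<^bsub>B_grp\<^esub>" p] by simp
  thus ?thesis using poly_act_closed[of "\<one>\<^bsub>B_grp\<^esub>" p] by (simp add: B.r_cancel_one')
qed

lemma poly_act_single_times: "b \<in> modB U A \<Longrightarrow>
    poly_act (Poly_Mapping.single m c * q) b = poly_act (Poly_Mapping.single m c) (poly_act q b)"
proof (induct q rule: poly_mapping_add_induct)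
  case zero thus ?case by (simp add: poly_act_zero poly_act_one)
next
  case (add f a d)
  have ab: "act (eval_monom a) b \<in> modB U A" using add act_closed by simp
  have "poly_act (Poly_Mapping.single (m + a) (c * d)) b
      = (act (eval_monom m) (act (eval_monom a) b) [^]\<^bsub>B_grp\<^esub> d) [^]\<^bsub>B_grp\<^esub> c"
    using add(2) act_act[OF eval_monom_closed eval_monom_closed add(2)] act_closed[OF eval_monom_closed ab]
    by (simp add: poly_act_single eval_monom_add B.int_pow_pow mult.commute)
  also have "\<dots> = poly_act (Poly_Mapping.single m c) (poly_act (Poly_Mapping.single a d) b)"
    using add(2) ab by (simp add: poly_act_single act_int_pow B.int_pow_closed)
  finally show ?case
    using add poly_act_closed by (simp add: distrib_left mult_single poly_act_add poly_act_mult)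
qed

lemma poly_act_times: "b \<in> modB U A \<Longrightarrow> poly_act (p * q) b = poly_act p (poly_act q b)"
proof (induct p rule: poly_mapping_add_induct)
  case zero thus ?case by (simp add: poly_act_zero)
next
  case (add f a d)
  thus ?case using poly_act_closed by (simp add: distrib_right poly_act_add poly_act_single_times)
qed

lemma poly_act_1: "b \<in> modB U A \<Longrightarrow> poly_act 1 b = b"
proof -
  assume b: "b \<in> modB U A"
  have "(1 :: 'a grp_poly) = Poly_Mapping.single 0 1" using single_of_int[of 1] by simp
  thus ?thesis using poly_act_single[OF b, of 0 1] act_G_one[OF b] b by simp
qed

end

sublocale abelian_normal_transversal \<subseteq> Z: comm_ring_action B_grp poly_act
  rewrites "carrier B_grp = modB U A"
  by unfold_locales
     (simp_all add: B_grp_simps(1) poly_act_closed poly_act_add poly_act_mult poly_act_times poly_act_1)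

context abelian_normal_transversal
begin

lemma poly_act_gvar: "\<xi> \<in> carrier G \<Longrightarrow> b \<in> modB U A \<Longrightarrow> poly_act (gvar \<xi>) b = act \<xi> b"
  unfolding gvar_def by (simp only: poly_act_single eval_monom_single) (simp add: act_closed)

lemma augm_gvar: "augm (gvar \<xi>) = 1"
  by (simp add: gvar_def augm_single)

section \<open>The crossed homomorphism and the transfer\<close>

definition delta :: "'a set \<Rightarrow> 'a set \<Rightarrow> int" where "delta \<xi> \<rho> = (if \<rho> = \<xi> then 1 else 0)"

definition beta :: "'a \<Rightarrow> 'a \<times> ('a set \<Rightarrow> int)" where
  "beta u = (u \<otimes> inv (r (A #> u)), \<lambda>\<rho>. delta (A #> u) \<rho> - delta A \<rho>)"

lemma beta_closed: "u \<in> carrier U \<Longrightarrow> beta u \<in> modB U A"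
proof -
  assume u: "u \<in> carrier U"
  have s: "A #> u \<in> carrier G" using rcos_in_G[OF u] .
  hence "u \<otimes> inv (r (A #> u)) \<in> A" using rcos_r[OF s] rcos_eq_iff u r_closed[OF s] by metis
  moreover have "(\<Sum>\<rho>\<in>carrier G. delta (A #> u) \<rho> - delta A \<rho>) = 0"
    using s finite_G by (simp add: sum_subtractf delta_def)
  ultimately show ?thesis using s by (auto simp: beta_def modB_iff augmentation_ideal_iff delta_def)
qed

lemma fst_act_beta: "\<sigma> \<in> carrier G \<Longrightarrow> v \<in> carrier U \<Longrightarrow>
    fst (act \<sigma> (beta v)) = r \<sigma> \<otimes> v \<otimes> inv (r (\<sigma> \<otimes>\<^bsub>G\<^esub> (A #> v)))"
proof -
  assume s: "\<sigma> \<in> carrier G" and v: "v \<in> carrier U"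
  define \<tau> where "\<tau> = A #> v"
  have t: "\<tau> \<in> carrier G" using rcos_in_G[OF v] by (simp add: \<tau>_def)
  have "prodA (\<lambda>\<rho>. fac \<sigma> \<rho> [^] (delta \<tau> \<rho> - delta A \<rho>)) = fac \<sigma> \<tau> [^] (delta \<tau> \<tau> - delta A \<tau>)"
    using s t by (intro Ab.finprod_eq_single) (auto simp: finite_G fac_pow_mem delta_def fac_one_right)
  also have "\<dots> = fac \<sigma> \<tau>" using s t fac_mem A_subset by (auto simp: delta_def fac_one_right subsetD)
  finally have "fst (act \<sigma> (beta v)) = conjg (r \<sigma>) (v \<otimes> inv (r \<tau>)) \<otimes> fac \<sigma> \<tau>"
    by (simp add: actB_fst beta_def \<tau>_def)
  thus ?thesis
    using r_closed[OF s] r_closed[OF t] r_closed[OF G.m_closed[OF s t]] v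
    by (simp add: conjg_def fac_eq m_assoc inv_mult_cancel_left \<tau>_def)
qed

lemma beta_mult: "u \<in> carrier U \<Longrightarrow> v \<in> carrier U \<Longrightarrow>
    beta (u \<otimes> v) = beta u \<otimes>\<^bsub>B_grp\<^esub> act (A #> u) (beta v)"
proof -
  assume u: "u \<in> carrier U" and v: "v \<in> carrier U"
  define \<sigma> where "\<sigma> = A #> u"
  define \<tau> where "\<tau> = A #> v"
  have s: "\<sigma> \<in> carrier G" and t: "\<tau> \<in> carrier G" using rcos_in_G u v by (auto simp: \<sigma>_def \<tau>_def)
  have uv: "A #> (u \<otimes> v) = \<sigma> \<otimes>\<^bsub>G\<^esub> \<tau>" using G_mult[OF u v] by (simp add: \<sigma>_def \<tau>_def)
  have "fst (beta u \<otimes>\<^bsub>B_grp\<^esub> act \<sigma> (beta v)) = fst (beta u) \<otimes> fst (act \<sigma> (beta v))"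
    by (simp add: B_grp_simps)
  also have "\<dots> = (u \<otimes> inv (r \<sigma>)) \<otimes> (r \<sigma> \<otimes> v \<otimes> inv (r (\<sigma> \<otimes>\<^bsub>G\<^esub> \<tau>)))"
    unfolding fst_act_beta[OF s v] by (simp add: beta_def \<sigma>_def \<tau>_def)
  also have "\<dots> = fst (beta (u \<otimes> v))"
    using u v r_closed[OF s] r_closed[OF G.m_closed[OF s t]]
    by (simp add: beta_def uv m_assoc inv_mult_cancel_left)
  finally have "fst (beta (u \<otimes> v)) = fst (beta u \<otimes>\<^bsub>B_grp\<^esub> act \<sigma> (beta v))" ..
  moreover have "snd (beta (u \<otimes> v)) \<rho> = snd (beta u \<otimes>\<^bsub>B_grp\<^esub> act \<sigma> (beta v)) \<rho>" for \<rho>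
  proof (cases "\<rho> \<in> carrier G")
    case True
    have "inv\<^bsub>G\<^esub> \<sigma> \<otimes>\<^bsub>G\<^esub> \<rho> = \<xi> \<longleftrightarrow> \<rho> = \<sigma> \<otimes>\<^bsub>G\<^esub> \<xi>" if "\<xi> \<in> carrier G" for \<xi>
      using G.inv_solve_left[OF that s True] by auto
    thus ?thesis using True s t
      by (simp add: B_grp_simps actB_snd beta_def uv delta_def flip: \<sigma>_def \<tau>_def)
  next
    case False
    thus ?thesis using s t by (auto simp: B_grp_simps actB_snd beta_def uv delta_def simp flip: \<sigma>_def \<tau>_def)
  qed
  ultimately show ?thesis by (simp add: prod_eq_iff \<sigma>_def fun_eq_iff)
qed

lemma beta_one: "beta \<one> = \<one>\<^bsub>B_grp\<^esub>"
  using A_subset by (simp add: beta_def B_grp_simps coset_mult_one r_A delta_def)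

lemma beta_A: "a \<in> A \<Longrightarrow> beta a = (a, \<lambda>_. 0)"
  using A_subset rcos_const[OF is_group] by (simp add: beta_def r_A subsetD)

lemma beta_r: "\<sigma> \<in> carrier G \<Longrightarrow> beta (r \<sigma>) = (\<one>, \<lambda>\<rho>. delta \<sigma> \<rho> - delta A \<rho>)"
  using r_closed by (simp add: beta_def rcos_r)

lemma traceB_eq_finprod: "b \<in> modB U A \<Longrightarrow> traceB U A r b = finprod B_grp (\<lambda>\<sigma>. act \<sigma> b) (carrier G)"
  using finprod_B[OF finite_G, of "\<lambda>\<sigma>. act \<sigma> b"] act_closed by (simp add: traceB_def)

lemma traceB_closed: "b \<in> modB U A \<Longrightarrow> traceB U A r b \<in> modB U A"
  by (simp add: traceB_eq_finprod act_closed B.finprod_closed Pi_def)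

lemma fst_traceB_beta: "u \<in> carrier U \<Longrightarrow> fst (traceB U A r (beta u)) = transfer U A r u"
proof -
  assume u: "u \<in> carrier U"
  have "fst (act \<sigma> (beta u)) = r \<sigma> \<otimes> u \<otimes> inv (r (\<sigma> <#> (A #> u)))" if "\<sigma> \<in> carrier G" for \<sigma>
    using fst_act_beta[OF that u] by (simp add: mult_FactGroup)
  moreover have "fst (act \<sigma> (beta u)) \<in> A" if "\<sigma> \<in> carrier G" for \<sigma>
    using act_closed[OF that beta_closed[OF u]] by (simp add: modB_iff)
  ultimately show ?thesis
    unfolding traceB_def transfer_def fst_conv by (intro Ab.finprod_cong') (auto simp: Pi_def)
qed

definition enum_U :: "'a list" where
  "enum_U = (SOME us. distinct us \<and> set us = carrier U)"

abbreviation nU where "nU \<equiv> length enum_U"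

lemma distinct_enum_U: "distinct enum_U" and set_enum_U: "set enum_U = carrier U"
proof -
  have "\<exists>us. distinct us \<and> set us = carrier U" using finite_distinct_list[OF finite_U] by blast
  hence "distinct enum_U \<and> set enum_U = carrier U" unfolding enum_U_def by (rule someI_ex)
  thus "distinct enum_U" "set enum_U = carrier U" by auto
qed

lemma enum_U_closed: "k < nU \<Longrightarrow> enum_U ! k \<in> carrier U"
  using nth_mem set_enum_U by blast

lemma ex_enum_U_eq: "u \<in> carrier U \<Longrightarrow> \<exists>k<nU. enum_U ! k = u"
  using set_enum_U by (metis in_set_conv_nth)

definition gen :: "nat \<Rightarrow> 'a \<times> ('a set \<Rightarrow> int)" where "gen k = beta (enum_U ! k)"

lemma gen_closed: "k < nU \<Longrightarrow> gen k \<in> modB U A"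
  unfolding gen_def using enum_U_closed beta_closed by simp

text \<open>\<open>span_below j\<close> is the submodule generated by the \<open>gen k\<close>, \<open>k < j\<close>, together with
  \<open>I\<^sub>G B\<close> (the \<open>gen k\<close> generate \<open>B\<close>, see \<open>span_below_nU\<close>).\<close>
definition span_below :: "nat \<Rightarrow> ('a \<times> ('a set \<Rightarrow> int)) set" where
  "span_below j = {finprod B_grp (\<lambda>k. poly_act (w k) (gen k)) {0..<nU} | w.
     \<forall>k\<in>{j..<nU}. augm (w k) = 0}"

lemma augm_uminus: "augm (- p) = - augm p"
  using augm_add[of p "- p"] by simp

lemma span_belowI:
  "(\<And>k. j \<le> k \<Longrightarrow> k < nU \<Longrightarrow> augm (w k) = 0) \<Longrightarrow>
    finprod B_grp (\<lambda>k. poly_act (w k) (gen k)) {0..<nU} \<in> span_below j"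
  unfolding span_below_def by auto

lemma subgroup_span_below: "subgroup (span_below j) B_grp"
proof (rule B.subgroupI)
  show "span_below j \<subseteq> modB U A"
    unfolding span_below_def by (auto intro!: B.finprod_closed simp: gen_closed)
  show "span_below j \<noteq> {}" using span_belowI[of j "\<lambda>_. 0"] by auto
next
  fix x assume "x \<in> span_below j"
  then obtain w where w: "\<forall>k\<in>{j..<nU}. augm (w k) = 0"
    and x: "x = finprod B_grp (\<lambda>k. poly_act (w k) (gen k)) {0..<nU}"
    unfolding span_below_def by blast
  have "(\<lambda>x. inv\<^bsub>B_grp\<^esub> x) \<in> hom B_grp B_grp"
    by (rule homI) (simp_all add: B_grp_simps(1) B.inv_mult)
  hence "inv\<^bsub>B_grp\<^esub> x = finprod B_grp (\<lambda>k. inv\<^bsub>B_grp\<^esub> (poly_act (w k) (gen k))) {0..<nU}"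
    unfolding x using gen_closed by (intro hom_finprod[OF comm_group_B comm_group_B]) (auto simp: B_grp_simps(1))
  also have "\<dots> = finprod B_grp (\<lambda>k. poly_act (- w k) (gen k)) {0..<nU}"
    using gen_closed by (intro B.finprod_cong') (simp_all add: Z.ract_uminus)
  finally show "inv\<^bsub>B_grp\<^esub> x \<in> span_below j"
    using w by (simp add: span_belowI augm_uminus)
next
  fix x y assume "x \<in> span_below j" "y \<in> span_below j"
  then obtain w w' where w: "\<forall>k\<in>{j..<nU}. augm (w k) = 0" "x = finprod B_grp (\<lambda>k. poly_act (w k) (gen k)) {0..<nU}"
    and w': "\<forall>k\<in>{j..<nU}. augm (w' k) = 0" "y = finprod B_grp (\<lambda>k. poly_act (w' k) (gen k)) {0..<nU}"
    unfolding span_below_def by blast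
  have "x \<otimes>\<^bsub>B_grp\<^esub> y = finprod B_grp (\<lambda>k. poly_act (w k) (gen k) \<otimes>\<^bsub>B_grp\<^esub> poly_act (w' k) (gen k)) {0..<nU}"
    unfolding w(2) w'(2) using gen_closed by (intro B.finprod_multf[symmetric]) auto
  also have "\<dots> = finprod B_grp (\<lambda>k. poly_act (w k + w' k) (gen k)) {0..<nU}"
    using gen_closed by (intro B.finprod_cong') (simp_all add: Z.ract_add)
  finally show "x \<otimes>\<^bsub>B_grp\<^esub> y \<in> span_below j"
    using w(1) w'(1) by (simp add: span_belowI augm_add)
qed

end

sublocale abelian_normal_transversal \<subseteq> span_below: subgroup "span_below j" B_grp for j
  by (rule subgroup_span_below)

context abelian_normal_transversal
begin

lemma span_below_mono: "i \<le> j \<Longrightarrow> span_below i \<subseteq> span_below j"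
  unfolding span_below_def by (auto 0 3)

lemma gen_mem_span_below: "i < nU \<Longrightarrow> i < j \<Longrightarrow> gen i \<in> span_below j"
proof -
  assume i: "i < nU" "i < j"
  have "finprod B_grp (\<lambda>k. poly_act (if k = i then 1 else 0) (gen k)) {0..<nU} = gen i"
    using i gen_closed by (subst B.finprod_eq_single[of _ i]) (auto simp: Z.ract_1)
  moreover have "\<forall>k\<in>{j..<nU}. augm (if k = i then 1 else 0) = 0"
    using i by simp
  ultimately show ?thesis using span_belowI[of j "\<lambda>k. if k = i then 1 else 0"] by simp
qed

lemma beta_mem_span_below_nU: "u \<in> carrier U \<Longrightarrow> beta u \<in> span_below nU"
proof -
  assume "u \<in> carrier U"
  then obtain k where "k < nU" "enum_U ! k = u" using ex_enum_U_eq by blast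
  thus ?thesis using gen_mem_span_below[of k nU] by (simp add: gen_def)
qed

lemma eq_beta_mult_finprod_beta_r:
  assumes b: "b \<in> modB U A"
  shows "b = beta (fst b) \<otimes>\<^bsub>B_grp\<^esub> finprod B_grp (\<lambda>\<sigma>. beta (r \<sigma>) [^]\<^bsub>B_grp\<^esub> snd b \<sigma>) (carrier G)"
proof -
  have a: "fst b \<in> A" and x0: "\<And>\<rho>. \<rho> \<notin> carrier G \<Longrightarrow> snd b \<rho> = 0"
    and xs: "(\<Sum>\<rho>\<in>carrier G. snd b \<rho>) = 0" using b by (auto simp: modB_iff augmentation_ideal_iff)
  have pow: "beta (r \<sigma>) [^]\<^bsub>B_grp\<^esub> k = (\<one>, \<lambda>\<rho>. k * (delta \<sigma> \<rho> - delta A \<rho>))"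
    if "\<sigma> \<in> carrier G" for \<sigma> and k :: int
    using that B_int_pow[OF beta_closed[OF r_closed[OF that]]] by (simp add: beta_r)
  have sum: "(\<Sum>\<sigma>\<in>carrier G. snd b \<sigma> * (delta \<sigma> \<rho> - delta A \<rho>)) = snd b \<rho>" for \<rho>
  proof -
    have "(\<Sum>\<sigma>\<in>carrier G. snd b \<sigma> * (delta \<sigma> \<rho> - delta A \<rho>))
        = (\<Sum>\<sigma>\<in>carrier G. snd b \<sigma> * delta \<sigma> \<rho>) - (\<Sum>\<sigma>\<in>carrier G. snd b \<sigma>) * delta A \<rho>"
      by (simp add: right_diff_distrib sum_subtractf sum_distrib_right)
    also have "(\<Sum>\<sigma>\<in>carrier G. snd b \<sigma> * delta \<sigma> \<rho>) = (\<Sum>\<sigma>\<in>carrier G. if \<rho> = \<sigma> then snd b \<sigma> else 0)"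
      by (rule sum.cong) (simp_all add: delta_def)
    also have "\<dots> = snd b \<rho>" using finite_G x0 by (simp add: sum.delta)
    finally show ?thesis using xs by simp
  qed
  have "finprod B_grp (\<lambda>\<sigma>. beta (r \<sigma>) [^]\<^bsub>B_grp\<^esub> snd b \<sigma>) (carrier G)
      = (prodA (\<lambda>\<sigma>. fst (beta (r \<sigma>) [^]\<^bsub>B_grp\<^esub> snd b \<sigma>)),
         \<lambda>\<rho>. \<Sum>\<sigma>\<in>carrier G. snd (beta (r \<sigma>) [^]\<^bsub>B_grp\<^esub> snd b \<sigma>) \<rho>)"
    using beta_closed r_closed B.int_pow_closed by (intro finprod_B[OF finite_G]) simp
  also have "prodA (\<lambda>\<sigma>. fst (beta (r \<sigma>) [^]\<^bsub>B_grp\<^esub> snd b \<sigma>)) = \<one>"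
    by (rule Ab.finprod_one_eqI) (simp add: pow)
  also have "(\<lambda>\<rho>. \<Sum>\<sigma>\<in>carrier G. snd (beta (r \<sigma>) [^]\<^bsub>B_grp\<^esub> snd b \<sigma>) \<rho>) = snd b"
    using sum by (intro ext) (simp add: pow)
  finally have "finprod B_grp (\<lambda>\<sigma>. beta (r \<sigma>) [^]\<^bsub>B_grp\<^esub> snd b \<sigma>) (carrier G) = (\<one>, snd b)" .
  moreover have "beta (fst b) \<otimes>\<^bsub>B_grp\<^esub> (\<one>, snd b) = b"
    using a A_subset by (cases b) (simp add: beta_A B_grp_simps subsetD)
  ultimately show ?thesis by (simp only:)
qed

lemma finprod_mem_span_below:
  "finite I \<Longrightarrow> (\<And>i. i \<in> I \<Longrightarrow> f i \<in> span_below j) \<Longrightarrow> finprod B_grp f I \<in> span_below j"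
proof (induct I rule: finite_induct)
  case empty thus ?case by (simp add: span_below.one_closed)
next
  case (insert x F)
  have "finprod B_grp f (insert x F) = f x \<otimes>\<^bsub>B_grp\<^esub> finprod B_grp f F"
    using insert span_below.subset by (intro B.finprod_insert) (auto simp: Pi_def B_grp_simps(1))
  thus ?case using insert by (simp add: span_below.m_closed)
qed

lemma span_below_nU: "b \<in> modB U A \<Longrightarrow> b \<in> span_below nU"
proof -
  assume b: "b \<in> modB U A"
  have "beta (fst b) \<in> span_below nU"
    using b A_subset by (intro beta_mem_span_below_nU) (auto simp: modB_iff)
  moreover have "finprod B_grp (\<lambda>\<sigma>. beta (r \<sigma>) [^]\<^bsub>B_grp\<^esub> snd b \<sigma>) (carrier G) \<in> span_below nU"
    using finite_G
    by (rule finprod_mem_span_below)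
       (rule B.subgroup_int_pow_closed[OF subgroup_span_below beta_mem_span_below_nU[OF r_closed]])
  ultimately have "beta (fst b) \<otimes>\<^bsub>B_grp\<^esub> finprod B_grp (\<lambda>\<sigma>. beta (r \<sigma>) [^]\<^bsub>B_grp\<^esub> snd b \<sigma>) (carrier G)
      \<in> span_below nU"
    by (rule span_below.m_closed)
  thus ?thesis by (simp only: eq_beta_mult_finprod_beta_r[OF b, symmetric])
qed

lemma augm_one: "augm 1 = 1"
  by (simp add: augm_def)

lemma poly_act_mem_span_below_0: "b \<in> modB U A \<Longrightarrow> augm p = 0 \<Longrightarrow> poly_act p b \<in> span_below 0"
proof -
  assume b: "b \<in> modB U A" and p: "augm p = 0"
  obtain w where w: "b = finprod B_grp (\<lambda>k. poly_act (w k) (gen k)) {0..<nU}"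
    using span_below_nU[OF b] unfolding span_below_def by blast
  have "poly_act p b = finprod B_grp (\<lambda>k. poly_act p (poly_act (w k) (gen k))) {0..<nU}"
    unfolding w using gen_closed by (intro Z.ract_finprod) auto
  also have "\<dots> = finprod B_grp (\<lambda>k. poly_act (p * w k) (gen k)) {0..<nU}"
    using gen_closed by (intro B.finprod_cong') (simp_all add: Z.ract_times)
  finally show ?thesis using p by (simp add: span_belowI augm_times)
qed

definition cong_IB :: "'a \<times> ('a set \<Rightarrow> int) \<Rightarrow> 'a \<times> ('a set \<Rightarrow> int) \<Rightarrow> bool" where
  "cong_IB x y \<longleftrightarrow> x \<in> modB U A \<and> y \<in> modB U A \<and> x \<otimes>\<^bsub>B_grp\<^esub> inv\<^bsub>B_grp\<^esub> y \<in> span_below 0"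

lemma cong_IB_refl: "x \<in> modB U A \<Longrightarrow> cong_IB x x"
  unfolding cong_IB_def by (simp add: span_below.one_closed)

lemma cong_IB_sym: "cong_IB x y \<Longrightarrow> cong_IB y x"
  unfolding cong_IB_def by (metis B.inv_mult_inv span_below.m_inv_closed)

lemma cong_IB_trans: "cong_IB x y \<Longrightarrow> cong_IB y z \<Longrightarrow> cong_IB x z"
  unfolding cong_IB_def by (metis B.mult_inv_trans span_below.m_closed)

lemma cong_IB_mult: "cong_IB x y \<Longrightarrow> cong_IB x' y' \<Longrightarrow> cong_IB (x \<otimes>\<^bsub>B_grp\<^esub> x') (y \<otimes>\<^bsub>B_grp\<^esub> y')"
  unfolding cong_IB_def by (simp add: B.mult_inv_mult span_below.m_closed)

lemma cong_IB_one_iff: "cong_IB x \<one>\<^bsub>B_grp\<^esub> \<longleftrightarrow> x \<in> span_below 0"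
  unfolding cong_IB_def using span_below.subset by (auto simp: B_grp_simps(1))

lemma mem_span_below_if_cong_IB: "cong_IB x y \<Longrightarrow> y \<in> span_below j \<Longrightarrow> x \<in> span_below j"
proof -
  assume xy: "cong_IB x y" and y: "y \<in> span_below j"
  hence "(x \<otimes>\<^bsub>B_grp\<^esub> inv\<^bsub>B_grp\<^esub> y) \<otimes>\<^bsub>B_grp\<^esub> y \<in> span_below j"
    using span_below_mono[of 0 j] unfolding cong_IB_def by (auto intro: span_below.m_closed)
  thus ?thesis using xy unfolding cong_IB_def by (simp add: B.m_assoc)
qed

lemma act_cong_IB: "\<sigma> \<in> carrier G \<Longrightarrow> b \<in> modB U A \<Longrightarrow> cong_IB (act \<sigma> b) b"
proof -
  assume s: "\<sigma> \<in> carrier G" and b: "b \<in> modB U A"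
  have "act \<sigma> b \<otimes>\<^bsub>B_grp\<^esub> inv\<^bsub>B_grp\<^esub> b = poly_act (gvar \<sigma> - 1) b"
    using s b by (simp add: Z.ract_diff Z.ract_1 poly_act_gvar)
  moreover have "augm (gvar \<sigma> - 1) = 0"
    using augm_add[of "gvar \<sigma> - 1" 1] augm_one by (simp add: augm_gvar)
  ultimately show ?thesis
    using s b poly_act_mem_span_below_0 act_closed unfolding cong_IB_def by simp
qed

lemma beta_mult_cong_IB: "u \<in> carrier U \<Longrightarrow> v \<in> carrier U \<Longrightarrow>
    cong_IB (beta (u \<otimes> v)) (beta u \<otimes>\<^bsub>B_grp\<^esub> beta v)"
  using beta_mult cong_IB_mult[OF cong_IB_refl act_cong_IB] rcos_in_G beta_closed by simp

lemma beta_inv_cong_IB: "u \<in> carrier U \<Longrightarrow> cong_IB (beta (inv u)) (inv\<^bsub>B_grp\<^esub> (beta u))"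
proof -
  assume u: "u \<in> carrier U"
  have "cong_IB (beta (inv u) \<otimes>\<^bsub>B_grp\<^esub> beta u) \<one>\<^bsub>B_grp\<^esub>"
    using cong_IB_sym[OF beta_mult_cong_IB[of "inv u" u]] u by (simp add: beta_one)
  hence "cong_IB ((beta (inv u) \<otimes>\<^bsub>B_grp\<^esub> beta u) \<otimes>\<^bsub>B_grp\<^esub> inv\<^bsub>B_grp\<^esub> (beta u))
      (\<one>\<^bsub>B_grp\<^esub> \<otimes>\<^bsub>B_grp\<^esub> inv\<^bsub>B_grp\<^esub> (beta u))"
    using u beta_closed by (intro cong_IB_mult cong_IB_refl) auto
  thus ?thesis using u beta_closed by (simp add: B.m_assoc)
qed

lemma beta_pow_cong_IB: "u \<in> carrier U \<Longrightarrow> cong_IB (beta (u [^] (n::nat))) (beta u [^]\<^bsub>B_grp\<^esub> n)"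
proof (induct n)
  case 0 thus ?case by (simp add: beta_one cong_IB_refl)
next
  case (Suc n)
  hence "cong_IB (beta (u [^] n) \<otimes>\<^bsub>B_grp\<^esub> beta u) (beta u [^]\<^bsub>B_grp\<^esub> n \<otimes>\<^bsub>B_grp\<^esub> beta u)"
    using beta_closed by (intro cong_IB_mult cong_IB_refl) auto
  thus ?case using beta_mult_cong_IB[of "u [^] n" u] Suc by (auto intro: cong_IB_trans)
qed

definition beta_preimage :: "nat \<Rightarrow> 'a set" where
  "beta_preimage j = {u \<in> carrier U. beta u \<in> span_below j}"

lemma subgroup_beta_preimage: "subgroup (beta_preimage j) U"
proof (rule subgroupI)
  show "beta_preimage j \<subseteq> carrier U" "beta_preimage j \<noteq> {}"
    unfolding beta_preimage_def using beta_one span_below.one_closed by force+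
next
  fix a assume "a \<in> beta_preimage j"
  thus "inv a \<in> beta_preimage j" unfolding beta_preimage_def
    using mem_span_below_if_cong_IB[OF beta_inv_cong_IB span_below.m_inv_closed] by simp
next
  fix a b assume "a \<in> beta_preimage j" "b \<in> beta_preimage j"
  thus "a \<otimes> b \<in> beta_preimage j" unfolding beta_preimage_def
    using mem_span_below_if_cong_IB[OF beta_mult_cong_IB span_below.m_closed] by simp
qed

lemma mult_inv_mem_beta_preimage_0:
  assumes x: "x \<in> carrier U" and y: "y \<in> carrier U" and xy: "cong_IB (beta x) (beta y)"
  shows "x \<otimes> inv y \<in> beta_preimage 0"
proof -
  have "cong_IB (beta x \<otimes>\<^bsub>B_grp\<^esub> beta (inv y)) (beta y \<otimes>\<^bsub>B_grp\<^esub> inv\<^bsub>B_grp\<^esub> (beta y))"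
    using xy beta_inv_cong_IB[OF y] by (rule cong_IB_mult)
  hence "cong_IB (beta (x \<otimes> inv y)) \<one>\<^bsub>B_grp\<^esub>"
    using beta_mult_cong_IB[of x "inv y"] x y beta_closed by (auto intro: cong_IB_trans)
  thus ?thesis using x y by (simp add: beta_preimage_def cong_IB_one_iff)
qed

lemma derived_subset_beta_preimage_0: "derived U (carrier U) \<subseteq> beta_preimage 0"
  unfolding derived_def
proof (rule generate_subgroup_incl[OF _ subgroup_beta_preimage], rule subsetI)
  fix c assume "c \<in> derived_set U (carrier U)"
  then obtain g h where g: "g \<in> carrier U" and h: "h \<in> carrier U" and c: "c = g \<otimes> h \<otimes> inv g \<otimes> inv h"
    by blast
  have "cong_IB (beta (g \<otimes> h)) (beta (h \<otimes> g))"
    using beta_mult_cong_IB[OF g h] beta_mult_cong_IB[OF h g] B.m_comm g h beta_closed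
    by (metis cong_IB_sym cong_IB_trans)
  moreover have "c = (g \<otimes> h) \<otimes> inv (h \<otimes> g)" using g h c by (simp add: inv_mult_group m_assoc)
  ultimately show "c \<in> beta_preimage 0" using g h by (simp add: mult_inv_mem_beta_preimage_0)
qed

primrec chain :: "nat \<Rightarrow> 'a set" where
  "chain 0 = beta_preimage 0"
| "chain (Suc j) = generate U (chain j \<union> {enum_U ! j})"

definition chain_index :: "nat \<Rightarrow> nat" where
  "chain_index j = (LEAST f. 0 < f \<and> (enum_U ! j) [^] f \<in> chain j)"

lemma chain_mono: "chain j \<subseteq> chain (Suc j)"
  by (auto intro: generate.incl)

lemma subgroup_chain_derived_subset:
  "j \<le> nU \<Longrightarrow> subgroup (chain j) U \<and> derived U (carrier U) \<subseteq> chain j"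
proof (induct j)
  case 0 show ?case by (simp add: subgroup_beta_preimage derived_subset_beta_preimage_0)
next
  case (Suc j)
  hence IH: "subgroup (chain j) U" "derived U (carrier U) \<subseteq> chain j" and j: "j < nU" by auto
  have "chain j \<union> {enum_U ! j} \<subseteq> carrier U" using subgroup.subset[OF IH(1)] enum_U_closed[OF j] by blast
  thus ?case using generate_is_subgroup IH(2) chain_mono[of j] by auto
qed

lemmas subgroup_chain = subgroup_chain_derived_subset[THEN conjunct1]
  and derived_subset_chain = subgroup_chain_derived_subset[THEN conjunct2]

lemma chain_index:
  assumes j: "j < nU"
  shows "0 < chain_index j" and "(enum_U ! j) [^] chain_index j \<in> chain j"
    and "card (chain (Suc j)) = chain_index j * card (chain j)"
proof -
  have "0 < ord (enum_U ! j) \<and> (enum_U ! j) [^] ord (enum_U ! j) \<in> chain j"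
    using ord_ge_1[OF finite_U enum_U_closed[OF j]] pow_ord_eq_1[OF enum_U_closed[OF j]]
      subgroup.one_closed[OF subgroup_chain] j by simp
  hence "0 < chain_index j \<and> (enum_U ! j) [^] chain_index j \<in> chain j"
    unfolding chain_index_def by (rule LeastI)
  thus "0 < chain_index j" "(enum_U ! j) [^] chain_index j \<in> chain j" by auto
  show "card (chain (Suc j)) = chain_index j * card (chain j)"
    using card_generate_insert[OF finite_U subgroup_chain derived_subset_chain enum_U_closed[OF j]] j
    by (simp add: chain_index_def)
qed

lemma card_chain: "j \<le> nU \<Longrightarrow> card (chain j) = (\<Prod>i<j. chain_index i) * card (beta_preimage 0)"
proof (induct j)
  case (Suc j) thus ?case using chain_index(3)[of j] by (simp del: chain.simps)
qed simp

lemma chain_mono_le: "i \<le> j \<Longrightarrow> chain i \<subseteq> chain j"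
proof (induct j rule: dec_induct)
  case (step n) thus ?case using chain_mono[of n] by blast
qed simp

lemma chain_nU: "chain nU = carrier U"
proof
  show "chain nU \<subseteq> carrier U" using subgroup.subset[OF subgroup_chain] by simp
  show "carrier U \<subseteq> chain nU"
  proof
    fix u assume "u \<in> carrier U"
    then obtain k where k: "k < nU" "enum_U ! k = u" using ex_enum_U_eq by blast
    have "chain (Suc k) \<subseteq> chain nU" using k(1) by (intro chain_mono_le) simp
    thus "u \<in> chain nU" using k(2) by (auto intro: generate.incl)
  qed
qed

lemma chain_subset_beta_preimage: "j \<le> nU \<Longrightarrow> i \<le> j \<Longrightarrow> chain i \<subseteq> beta_preimage j"
proof (induct i)
  case 0 thus ?case using span_below_mono by (auto simp: beta_preimage_def)
next
  case (Suc i)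
  hence "enum_U ! i \<in> beta_preimage j"
    using gen_mem_span_below[of i j] enum_U_closed by (simp add: beta_preimage_def gen_def)
  thus ?case using Suc generate_subgroup_incl[OF _ subgroup_beta_preimage] by simp
qed

lemma card_U_eq_prod_chain_index: "card (carrier U) = (\<Prod>i<nU. chain_index i) * card (beta_preimage 0)"
  using card_chain[of nU] chain_nU by simp

lemma gen_pow_chain_index_mem_span_below: "j < nU \<Longrightarrow> gen j [^]\<^bsub>B_grp\<^esub> chain_index j \<in> span_below j"
proof -
  assume j: "j < nU"
  hence "beta ((enum_U ! j) [^] chain_index j) \<in> span_below j"
    using chain_index(2)[OF j] chain_subset_beta_preimage[of j j] by (auto simp: beta_preimage_def)
  thus ?thesis
    using mem_span_below_if_cong_IB[OF cong_IB_sym[OF beta_pow_cong_IB[OF enum_U_closed[OF j]]]]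
    by (simp add: gen_def)
qed

section \<open>The determinant of the relations\<close>

definition rel_coeffs :: "nat \<Rightarrow> nat \<Rightarrow> 'a grp_poly" where
  "rel_coeffs j = (SOME w. (\<forall>k\<in>{j..<nU}. augm (w k) = 0) \<and>
     gen j [^]\<^bsub>B_grp\<^esub> chain_index j = finprod B_grp (\<lambda>k. poly_act (w k) (gen k)) {0..<nU})"

lemma rel_coeffs:
  assumes "j < nU"
  shows "\<forall>k\<in>{j..<nU}. augm (rel_coeffs j k) = 0"
    and "gen j [^]\<^bsub>B_grp\<^esub> chain_index j = finprod B_grp (\<lambda>k. poly_act (rel_coeffs j k) (gen k)) {0..<nU}"
proof -
  have "\<exists>w. (\<forall>k\<in>{j..<nU}. augm (w k) = 0) \<and>
      gen j [^]\<^bsub>B_grp\<^esub> chain_index j = finprod B_grp (\<lambda>k. poly_act (w k) (gen k)) {0..<nU}"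
    using gen_pow_chain_index_mem_span_below[OF assms] unfolding span_below_def by blast
  from someI_ex[OF this] show "\<forall>k\<in>{j..<nU}. augm (rel_coeffs j k) = 0"
    "gen j [^]\<^bsub>B_grp\<^esub> chain_index j = finprod B_grp (\<lambda>k. poly_act (rel_coeffs j k) (gen k)) {0..<nU}"
    unfolding rel_coeffs_def by blast+
qed

definition relation_matrix :: "'a grp_poly mat" where
  "relation_matrix = mat nU nU (\<lambda>(j, k). (if k = j then of_nat (chain_index j) else 0) - rel_coeffs j k)"

lemma relation_matrix_carrier: "relation_matrix \<in> carrier_mat nU nU"
  unfolding relation_matrix_def by simp

lemma relation_matrix_row:
  assumes j: "j < nU"
  shows "finprod B_grp (\<lambda>k. poly_act (relation_matrix $$ (j, k)) (gen k)) {0..<nU} = \<one>\<^bsub>B_grp\<^esub>"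
proof -
  define R where "R = finprod B_grp (\<lambda>k. poly_act (relation_matrix $$ (j, k)) (gen k)) {0..<nU}"
  define V where "V = finprod B_grp (\<lambda>k. poly_act (rel_coeffs j k) (gen k)) {0..<nU}"
  have RV: "R \<in> modB U A" "V \<in> modB U A"
    unfolding R_def V_def using gen_closed by (auto intro!: B.finprod_closed)
  have "R \<otimes>\<^bsub>B_grp\<^esub> V = finprod B_grp (\<lambda>k. poly_act (relation_matrix $$ (j, k)) (gen k) \<otimes>\<^bsub>B_grp\<^esub>
      poly_act (rel_coeffs j k) (gen k)) {0..<nU}"
    unfolding R_def V_def using gen_closed by (intro B.finprod_multf[symmetric]) auto
  also have "\<dots> = finprod B_grp (\<lambda>k. poly_act (relation_matrix $$ (j, k) + rel_coeffs j k) (gen k)) {0..<nU}"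
    using gen_closed by (intro B.finprod_cong') (simp_all add: Z.ract_add)
  also have "\<dots> = finprod B_grp (\<lambda>k. if j = k then gen k [^]\<^bsub>B_grp\<^esub> chain_index j else \<one>\<^bsub>B_grp\<^esub>) {0..<nU}"
    using j gen_closed by (intro B.finprod_cong') (auto simp: relation_matrix_def Z.ract_of_nat)
  also have "\<dots> = V"
    using j gen_closed rel_coeffs(2)[OF j] by (subst B.finprod_singleton) (auto simp: V_def)
  finally show ?thesis using RV by (simp add: R_def[symmetric] B.r_cancel_one')
qed

lemma poly_act_det_gen: "k < nU \<Longrightarrow> poly_act (det relation_matrix) (gen k) = \<one>\<^bsub>B_grp\<^esub>"
  by (rule Z.det_ract_eq_one[OF relation_matrix_carrier gen_closed relation_matrix_row])

lemma poly_act_det: "b \<in> modB U A \<Longrightarrow> poly_act (det relation_matrix) b = \<one>\<^bsub>B_grp\<^esub>"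
proof -
  assume b: "b \<in> modB U A"
  obtain w where w: "b = finprod B_grp (\<lambda>k. poly_act (w k) (gen k)) {0..<nU}"
    using span_below_nU[OF b] unfolding span_below_def by blast
  have "poly_act (det relation_matrix) b
      = finprod B_grp (\<lambda>k. poly_act (w k) (poly_act (det relation_matrix) (gen k))) {0..<nU}"
    unfolding w using gen_closed
    by (subst Z.ract_finprod) (auto intro!: B.finprod_cong' simp: Z.ract_times[symmetric] mult.commute)
  also have "\<dots> = \<one>\<^bsub>B_grp\<^esub>"
    by (intro B.finprod_one_eqI) (simp add: poly_act_det_gen)
  finally show ?thesis .
qed

lemma augm_det_relation_matrix: "augm (det relation_matrix) = int (\<Prod>i<nU. chain_index i)"
proof -
  interpret augm: comm_ring_hom augm by (rule comm_ring_hom_augm)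
  have "augm (det relation_matrix) = det (map_mat augm relation_matrix)" by simp
  also have "\<dots> = prod_list (diag_mat (map_mat augm relation_matrix))"
  proof (rule det_lower_triangular[of nU])
    fix i j assume "i < j" "j < nU"
    thus "map_mat augm relation_matrix $$ (i, j) = 0"
      using rel_coeffs(1)[of i] by (simp add: relation_matrix_def augm.hom_uminus)
  qed (simp add: relation_matrix_carrier)
  also have "\<dots> = (\<Prod>i = 0..<nU. int (chain_index i))"
    using rel_coeffs(1) relation_matrix_carrier
    by (simp add: prod_list_diag_prod relation_matrix_def augm.hom_of_nat augm.hom_minus augm.hom_add)
  finally show ?thesis by (simp add: atLeast0LessThan)
qed

lemma snd_poly_act: "b \<in> modB U A \<Longrightarrow>
    snd (poly_act p b) \<rho> = (\<Sum>\<sigma>\<in>carrier G. coeff_G p \<sigma> * snd (act \<sigma> b) \<rho>)"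
  unfolding poly_act_def using act_closed act_int_pow_closed
  by (subst finprod_B[OF finite_G]) (simp_all add: B_int_pow)

lemma snd_poly_act_beta_r:
  assumes \<xi>: "\<xi> \<in> carrier G"
  shows "snd (poly_act p (beta (r \<xi>))) A = coeff_G p (inv\<^bsub>G\<^esub> \<xi>) - coeff_G p A"
proof -
  have inv_eq: "inv\<^bsub>G\<^esub> \<tau> = \<rho> \<longleftrightarrow> \<tau> = inv\<^bsub>G\<^esub> \<rho>" if "\<tau> \<in> carrier G" "\<rho> \<in> carrier G" for \<tau> \<rho>
    using that by (metis G.inv_inv)
  have "snd (act \<tau> (beta (r \<xi>))) A = delta (inv\<^bsub>G\<^esub> \<xi>) \<tau> - delta A \<tau>" if "\<tau> \<in> carrier G" for \<tau>
    using that \<xi> inv_eq[OF that \<xi>] inv_eq[OF that A_in_G] by (simp add: actB_snd beta_r delta_def)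
  hence "snd (poly_act p (beta (r \<xi>))) A
      = (\<Sum>\<tau>\<in>carrier G. coeff_G p \<tau> * delta (inv\<^bsub>G\<^esub> \<xi>) \<tau>) - (\<Sum>\<tau>\<in>carrier G. coeff_G p \<tau> * delta A \<tau>)"
    using \<xi> r_closed beta_closed by (simp add: snd_poly_act right_diff_distrib sum_subtractf)
  moreover have dsum: "(\<Sum>\<tau>\<in>carrier G. coeff_G p \<tau> * delta \<rho> \<tau>) = coeff_G p \<rho>" if "\<rho> \<in> carrier G" for \<rho>
  proof -
    have "(\<Sum>\<tau>\<in>carrier G. coeff_G p \<tau> * delta \<rho> \<tau>) = (\<Sum>\<tau>\<in>carrier G. if \<tau> = \<rho> then coeff_G p \<tau> else 0)"
      by (rule sum.cong) (simp_all add: delta_def)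
    thus ?thesis using that finite_G by (simp add: sum.delta')
  qed
  ultimately show ?thesis using \<xi> by simp
qed

text \<open>Since \<open>det relation_matrix\<close> kills \<open>beta u\<^sub>\<xi> = \<xi> - 1\<close> for every \<open>\<xi>\<close>, its image in
  \<open>\<int>[G]\<close> is a multiple of the norm element \<open>\<Sum>\<^sub>\<sigma> \<sigma>\<close>.\<close>
lemma coeff_G_det_relation_matrix:
  "\<sigma> \<in> carrier G \<Longrightarrow> coeff_G (det relation_matrix) \<sigma> = coeff_G (det relation_matrix) A"
  using snd_poly_act_beta_r[of "inv\<^bsub>G\<^esub> \<sigma>" "det relation_matrix"]
    poly_act_det[OF beta_closed[OF r_closed]] by (simp add: B_grp_simps)

lemma poly_act_eq_traceB_pow:
  assumes c: "\<And>\<sigma>. \<sigma> \<in> carrier G \<Longrightarrow> coeff_G p \<sigma> = c" and b: "b \<in> modB U A"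
  shows "poly_act p b = traceB U A r b [^]\<^bsub>B_grp\<^esub> c"
proof -
  have "poly_act p b = finprod B_grp (\<lambda>\<sigma>. act \<sigma> b [^]\<^bsub>B_grp\<^esub> c) (carrier G)"
    unfolding poly_act_def using c b act_closed by (intro B.finprod_cong') auto
  also have "\<dots> = traceB U A r b [^]\<^bsub>B_grp\<^esub> c"
    using b act_closed finite_G by (simp add: traceB_eq_finprod B.finprod_int_pow Pi_def)
  finally show ?thesis .
qed

abbreviation det_coeff where "det_coeff \<equiv> coeff_G (det relation_matrix) A"

lemma traceB_pow_det_coeff: "b \<in> modB U A \<Longrightarrow> traceB U A r b [^]\<^bsub>B_grp\<^esub> det_coeff = \<one>\<^bsub>B_grp\<^esub>"
  using poly_act_eq_traceB_pow[OF coeff_G_det_relation_matrix] poly_act_det by simp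

lemma card_A_eq_det_coeff: "int (card A) = det_coeff * int (card (beta_preimage 0))"
proof -
  have "(\<Sum>\<sigma>\<in>carrier G. coeff_G (det relation_matrix) \<sigma>) = (\<Sum>\<sigma>\<in>carrier G. det_coeff)"
    by (rule sum.cong[OF refl coeff_G_det_relation_matrix])
  hence P: "int (\<Prod>i<nU. chain_index i) = det_coeff * int (card (carrier G))"
    using augm_det_relation_matrix augm_eq_sum_coeff_G[of "det relation_matrix"] by (simp add: mult.commute)
  have "card (carrier G) * card A = (\<Prod>i<nU. chain_index i) * card (beta_preimage 0)"
    using lagrange[OF subgroup_axioms] card_U_eq_prod_chain_index by (simp add: FactGroup_def Coset.order_def)
  hence "int (card (carrier G)) * int (card A) = int (\<Prod>i<nU. chain_index i) * int (card (beta_preimage 0))"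
    unfolding of_nat_mult[symmetric] by (rule arg_cong)
  also have "\<dots> = int (card (carrier G)) * (det_coeff * int (card (beta_preimage 0)))"
    unfolding P by (simp only: mult_ac)
  finally have "int (card (carrier G)) * int (card A)
      = int (card (carrier G)) * (det_coeff * int (card (beta_preimage 0)))" .
  moreover have "card (carrier G) \<noteq> 0" using finite_G A_in_G by auto
  ultimately show ?thesis by simp
qed

lemma card_derived_dvd: "card (derived U (carrier U)) dvd card (beta_preimage 0)"
proof -
  interpret L: group "U\<lparr>carrier := beta_preimage 0\<rparr>"
    by (rule subgroup_imp_group[OF subgroup_beta_preimage])
  have "subgroup (derived U (carrier U)) (U\<lparr>carrier := beta_preimage 0\<rparr>)"
    using subgroup_incl[OF derived_is_subgroup[OF subset_refl] subgroup_beta_preimage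
        derived_subset_beta_preimage_0] .
  from L.lagrange[OF this]
  have "card (rcosets\<^bsub>U\<lparr>carrier := beta_preimage 0\<rparr>\<^esub> derived U (carrier U)) * card (derived U (carrier U))
      = card (beta_preimage 0)" by (simp add: Coset.order_def)
  thus ?thesis by (metis dvd_triv_right)
qed

lemma smulB_eq_int_pow: "b \<in> modB U A \<Longrightarrow> smulB U k b = b [^]\<^bsub>B_grp\<^esub> k"
  by (simp add: smulB_def B_int_pow)

lemma traceB_annihilated:
  assumes b: "b \<in> modB U A"
  shows "smulB U (int (card A div card (derived U (carrier U)))) (traceB U A r b) = zeroB U"
proof -
  obtain q where q: "card (beta_preimage 0) = card (derived U (carrier U)) * q"
    using card_derived_dvd by (auto elim: dvdE)
  have "card (derived U (carrier U)) > 0"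
    using subgroup.finite_imp_card_positive[OF derived_is_subgroup[OF subset_refl] finite_U] .
  moreover have "0 \<le> det_coeff"
  proof -
    have "0 \<le> det_coeff * int (card (beta_preimage 0))" using card_A_eq_det_coeff[symmetric] by simp
    thus ?thesis
      using subgroup.finite_imp_card_positive[OF subgroup_beta_preimage[of 0] finite_U]
      by (simp add: zero_le_mult_iff)
  qed
  moreover have "int (card A) = int (nat det_coeff * q * card (derived U (carrier U)))"
    using card_A_eq_det_coeff q \<open>0 \<le> det_coeff\<close> by simp
  ultimately have "int (card A div card (derived U (carrier U))) = det_coeff * int q"
    by (simp only: of_nat_eq_iff) simp
  hence "smulB U (int (card A div card (derived U (carrier U)))) (traceB U A r b)
      = (traceB U A r b [^]\<^bsub>B_grp\<^esub> det_coeff) [^]\<^bsub>B_grp\<^esub> int q"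
    using traceB_closed[OF b] by (simp add: smulB_eq_int_pow B.int_pow_pow)
  also have "\<dots> = \<one>\<^bsub>B_grp\<^esub>" using b by (simp add: traceB_pow_det_coeff)
  finally show ?thesis by (simp add: zeroB_def B_grp_simps)
qed

lemma transfer_trivial:
  assumes "A = derived U (carrier U)" and u: "u \<in> carrier U"
  shows "transfer U A r u = \<one>"
proof -
  have "card A > 0" using subgroup.finite_imp_card_positive[OF subgroup_axioms finite_U] .
  hence "smulB U 1 (traceB U A r (beta u)) = zeroB U"
    using traceB_annihilated[OF beta_closed[OF u]] assms(1) by simp
  moreover have "fst (traceB U A r (beta u)) \<in> carrier U"
    using traceB_closed[OF beta_closed[OF u]] A_subset by (auto simp: modB_iff)
  ultimately show ?thesis
    using fst_traceB_beta[OF u] by (simp add: smulB_def zeroB_def)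
qed

end

theorem lemmaB:
  fixes U :: "'a monoid" and A :: "'a set" and r :: "'a set \<Rightarrow> 'a"
  assumes "group U" and "finite (carrier U)"
    and "A \<lhd> U"
    and "\<forall>x\<in>A. \<forall>y\<in>A. x \<otimes>\<^bsub>U\<^esub> y = y \<otimes>\<^bsub>U\<^esub> x"
    and "derived U (carrier U) \<subseteq> A"
    and "\<forall>\<sigma>\<in>carrier (U Mod A). r \<sigma> \<in> \<sigma>"
    and "r A = \<one>\<^bsub>U\<^esub>"
  shows "(\<forall>b\<in>modB U A.
            smulB U (int (card A div card (derived U (carrier U)))) (traceB U A r b) = zeroB U)
         \<and> (A = derived U (carrier U) \<longrightarrow> (\<forall>u\<in>carrier U. transfer U A r u = \<one>\<^bsub>U\<^esub>))"
proof -
  interpret abelian_normal_transversal U A r by (rule abelian_normal_transversal.intro) (fact assms)+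
  show ?thesis using traceB_annihilated transfer_trivial by blast
qed

end
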